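(* Let $\boldsymbol\Lambda=(\Lambda_1,\dots,\Lambda_m)$, where $\Lambda_1\ge\dots\ge\Lambda_m$ are the $m$ largest eigenvalues of $\mathbb{H}\mathbb{H}^H$ for a random matrix $\mathbb{H}\in\mathbb{C}^{t\times r}$, $m=\min\{t,r\}$. Consider the following auxiliary channel: a code with $M$ codewords and blocklength $n$ is an encoder $f:\{1,\dots,M\}\times\mathbb{R}_+^m\to\mathbb{C}^{n\times m}$ whose output $f(j,\boldsymbol\lambda)=[\mathbf{x}_1,\dots,\mathbf{x}_m]$ satisfies $\sum_{i=1}^m\|\mathbf{x}_i\|^2\le n\rho$, together with a decoder $g$ acting on $(\mathbb{Y},\boldsymbol\Lambda)$; given $\boldsymbol\Lambda=\boldsymbol\lambda$ and message $j$, the output $\mathbb{Y}=[\mathbf{y}_1,\dots,\mathbf{y}_m]\in\mathbb{C}^{n\times m}$ has independent columns $\mathbf{y}_i\sim\mathcal{CN}\big(\mathbf{0},(1+\tilde v_i\lambda_i)I_n\big)$, where $\tilde v_i=\|\mathbf{x}_i\|^2/n$ and $\mathbf{x}_i$ is the $i$th column of $f(j,\boldsymbol\lambda)$. Then for every such code with $M$ codewords and blocklength $n$, the maximal probability of error $\epsilon'=\max_j\Pr[g(\mathbb{Y},\boldsymbol\Lambda)\ne j\mid j]$ satisfies $$1-\epsilon'\le\frac{c_{\mathrm{rt}}(n)}{M},\qquad c_{\mathrm{rt}}(n)=\Big(\frac{(n-1)^ne^{-(n-1)}}{\Gamma(n)}+\frac{\Gamma(n,n-1)}{\Gamma(n)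}\Big)^m\mathbb{E}\big[\det(I_t+\rho\mathbb{H}\mathbb{H}^H)\big].$$
   Context: $\rho>0$ is fixed. $\Gamma(a,x)=\int_x^\infty s^{a-1}e^{-s}ds$ is the upper incomplete Gamma function. $\mathcal{CN}(\mathbf{0},\Sigma)$ is the circularly-symmetric complex Gaussian distribution. *)

theory Defs
  imports "HOL-Probability.Probability" "Jordan_Normal_Form.Schur_Decomposition"
begin

definition upper_Gamma :: "real \<Rightarrow> real \<Rightarrow> real" where
  "upper_Gamma a x = integral {x..} (\<lambda>s. s powr (a - 1) * exp (- s))"

text \<open>Circularly-symmetric complex Gaussian CN(0,s) on the complex plane
  (real and imaginary parts independent N(0,s/2)), given by its density.\<close>
definition cgauss :: "real \<Rightarrow> complex measure" where
  "cgauss s = density lborel (\<lambda>z. ennreal (exp (- (cmod z)\<^sup>2 / s) / (pi * s)))"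

definition top_eigs :: "nat \<Rightarrow> complex mat \<Rightarrow> (nat \<Rightarrow> real)" where
  "top_eigs m A = (\<lambda>i\<in>{..<m}.
     rev (sorted_list_of_multiset (image_mset Re (proots (char_poly A)))) ! i)"

definition col_pow :: "nat \<Rightarrow> complex mat \<Rightarrow> nat \<Rightarrow> real" where
  "col_pow n x i = (\<Sum>k<n. (cmod (x $$ (k, i)))\<^sup>2) / real n"

definition aux_chan :: "nat \<Rightarrow> nat \<Rightarrow> complex mat \<Rightarrow> (nat \<Rightarrow> real) \<Rightarrow> (nat \<times> nat \<Rightarrow> complex) measure" where
  "aux_chan n m x l = PiM ({..<n} \<times> {..<m}) (\<lambda>(k, i). cgauss (1 + col_pow n x i * l i))"

definition c_rt_factor :: "nat \<Rightarrow> real" where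
  "c_rt_factor n = (real (n - 1)) ^ n * exp (- real (n - 1)) / Gamma (real n)
                   + upper_Gamma (real n) (real (n - 1)) / Gamma (real n)"

end

theory Submission
  imports Defs
begin

text \<open>Given \<open>\<Lambda> = \<lambda>\<close>, the output law for message \<open>j\<close> has a density that is a product over the
  columns \<open>i\<close> of \<open>CN(0, s\<^sub>i I\<^sub>n)\<close> densities with \<open>s\<^sub>i = 1 + v\<^sub>i \<lambda>\<^sub>i \<in> [1, 1 + \<rho> \<lambda>\<^sub>i]\<close>.
  Since the decoding regions are disjoint, the sum over all messages of the success probabilities
  is at most the integral of the pointwise supremum of these densities over all admissible
  \<open>s\<^sub>i\<close>. This envelope factorises over the columns, and integrating one column in polar
  coordinates gives at most \<open>c_rt_factor n (1 + \<rho> \<lambda>\<^sub>i)\<close>. As the eigenvalues of \<open>H H\<^sup>H\<close> are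
  real and non-negative, \<open>\<Prod>\<^sub>i (1 + \<rho> \<lambda>\<^sub>i) \<le> det (I + \<rho> H H\<^sup>H)\<close>; averaging over \<open>H\<close> bounds
  the sum of the \<open>M\<close> success probabilities, each of which is at least \<open>1 - \<epsilon>'\<close>.\<close>

lemma power_eq_exp_mult_ln: "s > 0 \<Longrightarrow> s ^ n = exp (real n * ln s)"
  by (simp add: exp_of_nat_mult)

subsection \<open>The envelope of the complex Gaussian densities\<close>

text \<open>The supremum over \<open>s \<in> [1, S]\<close> of the \<open>CN(0, s I\<^sub>n)\<close> density \<open>exp (-u/s) / (\<pi> s)\<^sup>n\<close>
  at a point of squared norm \<open>u\<close>: the maximising \<open>s\<close> is \<open>u / n\<close>, clamped to \<open>[1, S]\<close>.\<close>
definition gauss_envelope :: "nat \<Rightarrow> real \<Rightarrow> real \<Rightarrow> real" where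
  "gauss_envelope n S u =
     (if u \<le> real n then exp (- u)
      else if u \<le> real n * S then (real n / u) ^ n * exp (- real n)
      else exp (- u / S) / S ^ n) / pi ^ n"

lemma gauss_envelope_nonneg: "S > 0 \<Longrightarrow> gauss_envelope n S u \<ge> 0"
  unfolding gauss_envelope_def by (auto intro!: divide_nonneg_nonneg mult_nonneg_nonneg)

lemma borel_measurable_gauss_envelope[measurable]: "gauss_envelope n S \<in> borel_measurable borel"
  unfolding gauss_envelope_def by measurable

lemma exp_div_power_le_gauss_envelope:
  assumes n: "n \<ge> 1" and s: "1 \<le> s" "s \<le> S" and u: "0 \<le> u"
  shows "exp (- u / s) / s ^ n \<le> pi ^ n * gauss_envelope n S u"
proof -
  have s0: "s > 0" and S0: "S > 0" using s by simp_all
  have L: "exp (- u / s) / s ^ n = exp (- u / s - real n * ln s)"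
    using s0 by (simp add: exp_diff power_eq_exp_mult_ln)
  consider "u \<le> real n" | "real n < u" "u \<le> real n * S" | "real n * S < u" by linarith
  then show ?thesis
  proof cases
    case 1
    have "ln (1 / s) \<le> 1 / s - 1" using s0 by (intro ln_le_minus_one) simp
    then have l: "1 - 1 / s \<le> ln s" using s0 by (simp add: ln_div)
    have "u * (1 - 1 / s) \<le> real n * (1 - 1 / s)"
      using 1 s by (intro mult_right_mono) (auto simp: field_simps)
    also have "\<dots> \<le> real n * ln s" using l by (intro mult_left_mono) auto
    finally have "- u / s - real n * ln s \<le> - u" by (simp add: field_simps)
    then show ?thesis using 1 L by (simp add: gauss_envelope_def)
  next
    case 2
    have u0: "u > 0" using 2 n by linarith
    define x where "x = u / (real n * s)"
    have x0: "x > 0" unfolding x_def using u0 s0 n by simp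
    have "ln x \<le> x - 1" using x0 by (rule ln_le_minus_one)
    then have "real n * ln x \<le> real n * (x - 1)" by (intro mult_left_mono) auto
    moreover have "ln x = ln u - ln (real n) - ln s" unfolding x_def using u0 s0 n by (simp add: ln_div ln_mult)
    moreover have "real n * x = u / s" unfolding x_def using n by (simp add: field_simps)
    ultimately have ineq: "- u / s - real n * ln s \<le> real n * (ln (real n) - ln u) - real n"
      by (simp add: algebra_simps)
    have "(real n / u) ^ n = exp (real n * (ln (real n) - ln u))"
      using power_eq_exp_mult_ln[of "real n / u" n] u0 n by (simp add: ln_div)
    then have R: "(real n / u) ^ n * exp (- real n) = exp (real n * (ln (real n) - ln u) - real n)"
      by (simp add: exp_diff exp_minus divide_inverse)
    show ?thesis using 2 L R ineq by (simp add: gauss_envelope_def)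
  next
    case 3
    have "ln (S / s) \<le> S / s - 1" using s0 S0 by (intro ln_le_minus_one) simp
    also have "S / s - 1 = S * (1 / s - 1 / S)" using S0 s0 by (simp add: field_simps)
    finally have "real n * ln (S / s) \<le> real n * (S * (1 / s - 1 / S))"
      by (intro mult_left_mono) auto
    also have "\<dots> \<le> u * (1 / s - 1 / S)"
    proof -
      have "1 / s - 1 / S \<ge> 0" using s s0 by (simp add: frac_le)
      then show ?thesis using 3 by (simp add: mult_right_mono mult.assoc[symmetric])
    qed
    finally have "- u / s - real n * ln s \<le> - u / S - real n * ln S"
      using s0 S0 by (simp add: ln_div algebra_simps)
    moreover have "exp (- u / S) / S ^ n = exp (- u / S - real n * ln S)"
      using S0 by (simp add: exp_diff power_eq_exp_mult_ln)
    moreover have "real n * 1 \<le> real n * S" using s by (intro mult_left_mono) auto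
    ultimately show ?thesis using L 3 by (simp add: gauss_envelope_def)
  qed
qed

lemma cgauss_power_density_le_gauss_envelope:
  assumes "n \<ge> 1" "1 \<le> s" "s \<le> S" "0 \<le> u"
  shows "exp (- u / s) / (pi * s) ^ n \<le> gauss_envelope n S u"
proof -
  have "exp (- u / s) / (pi * s) ^ n = (exp (- u / s) / s ^ n) / pi ^ n"
    by (simp add: power_mult_distrib field_simps)
  also have "\<dots> \<le> (pi ^ n * gauss_envelope n S u) / pi ^ n"
    by (intro divide_right_mono exp_div_power_le_gauss_envelope[OF assms]) simp
  finally show ?thesis by simp
qed

subsection \<open>Incomplete Gamma integrals\<close>

lemma upper_Gamma_nonneg: "upper_Gamma a x \<ge> 0" if "x \<ge> 0"
proof (cases "(\<lambda>s. s powr (a - 1) * exp (- s)) integrable_on {x..}")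
  case True then show ?thesis unfolding upper_Gamma_def
    by (intro integral_nonneg) auto
next
  case False then show ?thesis unfolding upper_Gamma_def by (simp add: not_integrable_integral)
qed

lemma upper_Gamma_eq_nn_integral_powr:
  assumes n: "n \<ge> 1" and c: "c \<ge> 0"
  shows "ennreal (upper_Gamma (real n) c) =
    (\<integral>\<^sup>+ s. ennreal (indicator {c..} s * (s powr (real n - 1) * exp (- s))) \<partial>lborel)"
proof -
  define g where "g = (\<lambda>s. indicator {c..} s * (s powr (real n - 1) * exp (- s)))"
  have gm[measurable]: "g \<in> borel_measurable borel" unfolding g_def by measurable
  have g0: "g s \<ge> 0" for s unfolding g_def by auto
  have "(\<integral>\<^sup>+ s. ennreal (g s) \<partial>lborel) \<le> (\<integral>\<^sup>+ t. ennreal (indicator {0..} t * t powr (real n - 1) / exp t) \<partial>lborel)"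
    unfolding g_def using c
    by (intro nn_integral_mono ennreal_leI) (auto simp: indicator_def exp_minus field_simps)
  also have "\<dots> = ennreal (Gamma (real n))"
    using Gamma_conv_nn_integral_real[of "real n"] n by simp
  finally have "(\<integral>\<^sup>+ s. ennreal (g s) \<partial>lborel) < \<infinity>" by (simp add: le_less_trans)
  then obtain r where r: "(\<integral>\<^sup>+ s. ennreal (g s) \<partial>lborel) = ennreal r" "r \<ge> 0"
    by (cases "(\<integral>\<^sup>+ s. ennreal (g s) \<partial>lborel)") auto
  have "(g has_integral r) UNIV" by (rule nn_integral_has_integral[OF gm g0 r])
  then have "((\<lambda>s. if s \<in> {c..} then s powr (real n - 1) * exp (- s) else 0) has_integral r) UNIV"
    by (rule has_integral_eq[rotated]) (simp add: g_def indicator_def)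
  then have "((\<lambda>s. s powr (real n - 1) * exp (- s)) has_integral r) {c..}"
    by (simp only: has_integral_restrict_UNIV)
  then have "upper_Gamma (real n) c = r" unfolding upper_Gamma_def by (rule integral_unique)
  then show ?thesis using r g_def by simp
qed

lemma upper_Gamma_eq_nn_integral:
  assumes n: "n \<ge> 1" and c: "c \<ge> 0"
  shows "ennreal (upper_Gamma (real n) c) =
    (\<integral>\<^sup>+ s. ennreal (s ^ (n - 1) * exp (- s)) * indicator {c..} s \<partial>lborel)"
  unfolding upper_Gamma_eq_nn_integral_powr[OF n c]
proof (rule nn_integral_cong_AE)
  show "AE s in lborel. ennreal (indicator {c..} s * (s powr (real n - 1) * exp (- s))) =
      ennreal (s ^ (n - 1) * exp (- s)) * indicator {c..} s"
    using AE_lborel_singleton[of 0]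
  proof eventually_elim
    case (elim s)
    show ?case
    proof (cases "s \<in> {c..}")
      case True
      then have "s > 0" using elim c by auto
      then have "s powr (real n - 1) = s ^ (n - 1)"
        using n by (simp add: powr_realpow[symmetric] of_nat_diff)
      then show ?thesis using True by simp
    qed simp
  qed
qed

lemma power_mult_exp_neg_le:
  assumes w: "w \<ge> 0"
  shows "w ^ k * exp (- w) \<le> real k ^ k * exp (- real k)"
proof (cases "k = 0 \<or> w = 0")
  case True then show ?thesis using w by (auto simp: power_0_left)
next
  case False
  then have w0: "w > 0" and k1: "real k \<ge> 1" using w by auto
  have "ln (w / k) \<le> w / k - 1" using w0 k1 by (intro ln_le_minus_one) simp
  then have "k * ln (w / k) \<le> k * (w / k - 1)" by (intro mult_left_mono) auto
  moreover have "k * ln (w / k) = k * ln w - k * ln k" using k1 w0 by (simp add: ln_div right_diff_distrib)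
  moreover have "k * (w / k - 1) = w - k" using k1 by (simp add: field_simps)
  ultimately have "k * ln w - w \<le> k * ln k - k" by linarith
  then have "exp (k * ln w - w) \<le> exp (k * ln k - k)" by simp
  then show ?thesis
    using w0 k1 by (simp add: power_eq_exp_mult_ln exp_diff exp_minus divide_inverse)
qed

lemma nn_integral_exp_neg_atLeast:
  "(\<integral>\<^sup>+ s. ennreal (exp (- s)) * indicator {c..} s \<partial>lborel) = ennreal (exp (- c))"
proof -
  have "((\<lambda>x::real. exp (- x)) \<longlongrightarrow> 0) at_top"
    by (rule filterlim_compose[OF exp_at_bot filterlim_uminus_at_bot_at_top])
  then have lim: "((\<lambda>x::real. - exp (- x)) \<longlongrightarrow> (0::real)) at_top"
    using tendsto_minus by fastforce
  have "(\<integral>\<^sup>+ s. ennreal (exp (- s)) * indicator {c..} s \<partial>lborel) = ennreal (0 - (- exp (- c)))"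
    by (rule nn_integral_FTC_atLeast[OF _ _ _ lim]) (auto intro!: derivative_eq_intros)
  then show ?thesis by simp
qed

lemma upper_Gamma_ge:
  assumes n: "n \<ge> 1" and c: "c \<ge> 0"
  shows "c ^ (n - 1) * exp (- c) \<le> upper_Gamma (real n) c"
proof -
  have "ennreal (c ^ (n - 1) * exp (- c)) =
      ennreal (c ^ (n - 1)) * (\<integral>\<^sup>+ s. ennreal (exp (- s)) * indicator {c..} s \<partial>lborel)"
    using c by (simp add: nn_integral_exp_neg_atLeast ennreal_mult)
  also have "\<dots> = (\<integral>\<^sup>+ s. ennreal (c ^ (n - 1)) * (ennreal (exp (- s)) * indicator {c..} s) \<partial>lborel)"
    by (rule nn_integral_cmult[symmetric]) measurable
  also have "\<dots> \<le> (\<integral>\<^sup>+ s. ennreal (s ^ (n - 1) * exp (- s)) * indicator {c..} s \<partial>lborel)"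
    using c by (intro nn_integral_mono)
      (auto simp: ennreal_mult[symmetric] intro!: ennreal_leI mult_right_mono power_mono split: split_indicator)
  also have "\<dots> = ennreal (upper_Gamma (real n) c)"
    using upper_Gamma_eq_nn_integral[OF n c] by simp
  finally show ?thesis
    by (subst (asm) ennreal_le_iff) (auto intro!: upper_Gamma_nonneg c)
qed

definition c_rt_numerator :: "nat \<Rightarrow> real" where
  "c_rt_numerator n = real (n - 1) ^ n * exp (- real (n - 1)) + upper_Gamma (real n) (real (n - 1))"

lemma c_rt_numerator_nonneg: "c_rt_numerator n \<ge> 0"
  unfolding c_rt_numerator_def by (intro add_nonneg_nonneg upper_Gamma_nonneg) auto

lemma c_rt_factor_eq: "n \<ge> 1 \<Longrightarrow> c_rt_factor n = c_rt_numerator n / fact (n - 1)"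
  using Gamma_fact[of "n - 1", where 'a = real]
  by (simp add: c_rt_factor_def c_rt_numerator_def of_nat_diff add_divide_distrib)

lemma c_rt_factor_nonneg: "c_rt_factor n \<ge> 0"
proof -
  have "Gamma (real n) \<ge> 0"
    by (cases n) (auto intro: less_imp_le Gamma_real_pos)
  then show ?thesis unfolding c_rt_factor_def
    by (intro add_nonneg_nonneg divide_nonneg_nonneg mult_nonneg_nonneg upper_Gamma_nonneg) auto
qed

text \<open>Split at \<open>n - 1\<close>, the maximum point of the integrand \<open>w\<^sup>n\<^sup>-\<^sup>1 e\<^sup>-\<^sup>w\<close>.\<close>
lemma nn_integral_Gamma_le_c_rt_numerator:
  assumes n: "n \<ge> 1"
  shows "(\<integral>\<^sup>+ w. ennreal (w ^ (n - 1) * exp (- w)) * indicator {0..} w \<partial>lborel) \<le> ennreal (c_rt_numerator n)"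
proof -
  define c where "c = real (n - 1)"
  have c0: "c \<ge> 0" unfolding c_def by simp
  define f where "f = (\<lambda>w::real. ennreal (w ^ (n - 1) * exp (- w)))"
  have fm[measurable]: "f \<in> borel_measurable borel" unfolding f_def by measurable
  have "(\<integral>\<^sup>+ w. f w * indicator {0..} w \<partial>lborel) =
      (\<integral>\<^sup>+ w. f w * indicator {0..<c} w + f w * indicator {c..} w \<partial>lborel)"
    using c0 by (intro nn_integral_cong) (auto split: split_indicator)
  also have "\<dots> = (\<integral>\<^sup>+ w. f w * indicator {0..<c} w \<partial>lborel) + (\<integral>\<^sup>+ w. f w * indicator {c..} w \<partial>lborel)"
    by (rule nn_integral_add) measurable
  also have "(\<integral>\<^sup>+ w. f w * indicator {c..} w \<partial>lborel) = ennreal (upper_Gamma (real n) c)"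
    unfolding f_def using upper_Gamma_eq_nn_integral[OF n c0] by simp
  also have "(\<integral>\<^sup>+ w. f w * indicator {0..<c} w \<partial>lborel) \<le>
      (\<integral>\<^sup>+ w. ennreal (c ^ (n - 1) * exp (- c)) * indicator {0..<c} w \<partial>lborel)"
    unfolding f_def c_def using power_mult_exp_neg_le
    by (intro nn_integral_mono) (auto intro!: ennreal_leI split: split_indicator)
  also have "\<dots> = ennreal (c ^ (n - 1) * exp (- c) * c)"
    using c0 by (subst nn_integral_cmult_indicator) (auto simp: ennreal_mult)
  also have "c ^ (n - 1) * exp (- c) * c = c ^ n * exp (- c)"
    using n by (cases n) (auto simp: field_simps)
  finally show ?thesis
    using c0 upper_Gamma_nonneg[OF c0, of "real n"] unfolding f_def c_def c_rt_numerator_def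
    by (simp add: ennreal_plus[symmetric] del: ennreal_plus)
qed

lemma n_power_exp_le_c_rt_numerator:
  assumes n: "n \<ge> 1"
  shows "real n ^ n * exp (- real n) \<le> c_rt_numerator n"
proof -
  define c where "c = real (n - 1)"
  have c0: "c \<ge> 0" unfolding c_def by simp
  have nc: "real n = c + 1" unfolding c_def using n by (simp add: of_nat_diff)
  have key: "real n ^ (n - 1) \<le> exp 1 * c ^ (n - 1)"
  proof (cases "n = 1")
    case False
    then have c1: "c \<ge> 1" using n c_def by simp
    have "(1 + 1 / c) ^ (n - 1) \<le> exp 1"
      unfolding c_def using False n by (intro exp_ge_one_plus_x_over_n_power_n) auto
    then have "c ^ (n - 1) * (1 + 1 / c) ^ (n - 1) \<le> c ^ (n - 1) * exp 1"
      using c0 by (intro mult_left_mono) auto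
    moreover have "c ^ (n - 1) * (1 + 1 / c) ^ (n - 1) = real n ^ (n - 1)"
      using c1 nc by (simp add: power_mult_distrib[symmetric] field_simps)
    ultimately show ?thesis by (simp add: mult.commute)
  qed simp
  have "real n ^ n * exp (- real n) = real n * (real n ^ (n - 1) * exp (- real n))"
    using n by (cases n) auto
  also have "\<dots> \<le> real n * (exp 1 * c ^ (n - 1) * exp (- real n))"
    using key by (intro mult_left_mono mult_right_mono) auto
  also have "exp 1 * c ^ (n - 1) * exp (- real n) = c ^ (n - 1) * exp (- c)"
    using nc by (simp add: mult_exp_exp)
  also have "real n * (c ^ (n - 1) * exp (- c)) = c ^ n * exp (- c) + c ^ (n - 1) * exp (- c)"
    using n nc by (cases n) (auto simp: field_simps)
  also have "\<dots> \<le> c ^ n * exp (- c) + upper_Gamma (real n) c"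
    using upper_Gamma_ge[OF n c0] by simp
  finally show ?thesis unfolding c_def c_rt_numerator_def .
qed

subsection \<open>Integrating the envelope\<close>

lemma power_div_mult_power_le:
  assumes n: "n \<ge> 1" and u: "real n < u"
  shows "(real n / u) ^ n * exp (- real n) * u ^ (n - 1) \<le> real n ^ (n - 1) * exp (- real n)"
proof -
  have u0: "u > 0" using u n by linarith
  have "(real n / u) ^ n * u ^ (n - 1) = real n ^ n / u"
    using n u0 by (cases n) (auto simp: power_divide field_simps)
  also have "\<dots> \<le> real n ^ n / real n" using u n by (intro divide_left_mono) auto
  also have "\<dots> = real n ^ (n - 1)" using n by (cases n) auto
  finally show ?thesis by (simp add: mult.commute mult.left_commute mult_left_mono)
qed

lemma gauss_envelope_power_le:
  assumes n: "n \<ge> 1" and S: "S \<ge> 1" and u: "u \<ge> 0"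
  shows "ennreal (gauss_envelope n S u) * ennreal (u ^ (n - 1)) \<le> ennreal (1 / pi ^ n) *
    (ennreal (u ^ (n - 1) * exp (- u)) * indicator {0..real n} u
     + ennreal (real n ^ (n - 1) * exp (- real n)) * indicator {real n<..real n * S} u
     + ennreal (exp (- u / S) / S ^ n * u ^ (n - 1)) * indicator {real n * S<..} u)"
    (is "_ \<le> ennreal (1 / pi ^ n) * (?p1 + ?p2 + ?p3)")
proof -
  have "real n * 1 \<le> real n * S" using S by (intro mult_left_mono) auto
  then consider "u \<le> real n" "?p2 = 0" "?p3 = 0" | "real n < u" "u \<le> real n * S" "?p1 = 0" "?p3 = 0"
    | "real n * S < u" "?p1 = 0" "?p2 = 0"
    by (cases "u \<le> real n"; cases "u \<le> real n * S") auto
  then show ?thesis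
  proof cases
    case 1
    then show ?thesis
      using u by (simp add: gauss_envelope_def ennreal_mult[symmetric] field_simps)
  next
    case 2
    then have "gauss_envelope n S u * u ^ (n - 1) \<le> 1 / pi ^ n * (real n ^ (n - 1) * exp (- real n))"
      using power_div_mult_power_le[OF n 2(1)]
      by (simp add: gauss_envelope_def divide_right_mono mult.commute mult.left_commute)
    then show ?thesis
      using 2 u gauss_envelope_nonneg[of S n u] S
      by (simp add: ennreal_mult[symmetric] ennreal_leI)
  next
    case 3
    then show ?thesis
      using u S by (simp add: gauss_envelope_def ennreal_mult[symmetric] field_simps)
  qed
qed

lemma nn_integral_scaled_Gamma_tail:
  assumes S: "S > 0" and n: "n \<ge> 1"
  shows "(\<integral>\<^sup>+ u. ennreal (exp (- u / S) / S ^ n * u ^ (n - 1)) * indicator {c * S<..} u \<partial>lborel) =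
    (\<integral>\<^sup>+ w. ennreal (w ^ (n - 1) * exp (- w)) * indicator {c<..} w \<partial>lborel)"
proof -
  define p where "p = (\<lambda>u. ennreal (exp (- u / S) / S ^ n * u ^ (n - 1)) * indicator {c * S<..} u)"
  have [measurable]: "p \<in> borel_measurable borel" unfolding p_def by measurable
  have "integral\<^sup>N lborel p = ennreal S * (\<integral>\<^sup>+ w. p (S * w) \<partial>lborel)"
    using nn_integral_real_affine[of p S 0] S by simp
  also have "\<dots> = (\<integral>\<^sup>+ w. ennreal S * p (S * w) \<partial>lborel)"
    by (rule nn_integral_cmult[symmetric]) measurable
  also have "\<dots> = (\<integral>\<^sup>+ w. ennreal (w ^ (n - 1) * exp (- w)) * indicator {c<..} w \<partial>lborel)"
  proof (rule nn_integral_cong)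
    fix w
    have "S * (exp (- (S * w) / S) / S ^ n * (S * w) ^ (n - 1)) = w ^ (n - 1) * exp (- w)"
      using S n by (cases n) (auto simp: power_mult_distrib field_simps)
    then have "ennreal S * ennreal (exp (- (S * w) / S) / S ^ n * (S * w) ^ (n - 1)) = ennreal (w ^ (n - 1) * exp (- w))"
      using S by (metis ennreal_mult' less_imp_le)
    moreover have "S * w \<in> {c * S<..} \<longleftrightarrow> w \<in> {c<..}" using S by (auto simp: mult.commute)
    ultimately show "ennreal S * p (S * w) = ennreal (w ^ (n - 1) * exp (- w)) * indicator {c<..} w"
      unfolding p_def mult.assoc[symmetric] by (simp add: indicator_def)
  qed
  finally show ?thesis unfolding p_def .
qed

text \<open>Below \<open>n\<close> and above \<open>n S\<close> the envelope integrates to at most the complete Gamma integral,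
  and the plateau in between contributes \<open>n\<^sup>n e\<^sup>-\<^sup>n (S - 1)\<close>.\<close>
lemma nn_integral_gauss_envelope_le:
  assumes n: "n \<ge> 1" and S: "S \<ge> 1"
  shows "(\<integral>\<^sup>+ u. ennreal (gauss_envelope n S u) * ennreal (u ^ (n - 1)) * indicator {0..} u \<partial>lborel)
    \<le> ennreal (c_rt_numerator n * S / pi ^ n)"
proof -
  define N where "N = real n"
  define C where "C = c_rt_numerator n"
  define a where "a = N ^ n * exp (- N)"
  have N1: "N \<ge> 1" unfolding N_def using n by simp
  have NS: "N \<le> N * S" using N1 S by (metis mult.right_neutral mult_left_mono order.trans zero_le_one)
  have a0: "a \<ge> 0" and C0: "C \<ge> 0" unfolding a_def C_def N_def by (simp_all add: c_rt_numerator_nonneg)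
  have [measurable]: "Measurable.pred borel (\<lambda>u::real. u \<in> {a<..})" for a :: real by measurable
  have "(\<integral>\<^sup>+ u. ennreal (gauss_envelope n S u) * ennreal (u ^ (n - 1)) * indicator {0..} u \<partial>lborel) \<le>
      (\<integral>\<^sup>+ u. ennreal (1 / pi ^ n) *
        (ennreal (u ^ (n - 1) * exp (- u)) * indicator {0..N} u
         + ennreal (N ^ (n - 1) * exp (- N)) * indicator {N<..N * S} u
         + ennreal (exp (- u / S) / S ^ n * u ^ (n - 1)) * indicator {N * S<..} u) \<partial>lborel)"
    unfolding N_def using gauss_envelope_power_le[OF n S]
    by (intro nn_integral_mono) (auto split: split_indicator)
  also have "\<dots> = ennreal (1 / pi ^ n) *
      ((\<integral>\<^sup>+ u. ennreal (u ^ (n - 1) * exp (- u)) * indicator {0..N} u \<partial>lborel)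
       + (\<integral>\<^sup>+ w. ennreal (w ^ (n - 1) * exp (- w)) * indicator {N<..} w \<partial>lborel)
       + (\<integral>\<^sup>+ u. ennreal (N ^ (n - 1) * exp (- N)) * indicator {N<..N * S} u \<partial>lborel))"
    using nn_integral_scaled_Gamma_tail[of S n N] n S
    by (simp add: nn_integral_cmult nn_integral_add add_ac)
  also have "(\<integral>\<^sup>+ u. ennreal (u ^ (n - 1) * exp (- u)) * indicator {0..N} u \<partial>lborel)
       + (\<integral>\<^sup>+ w. ennreal (w ^ (n - 1) * exp (- w)) * indicator {N<..} w \<partial>lborel)
      = (\<integral>\<^sup>+ w. ennreal (w ^ (n - 1) * exp (- w)) * indicator {0..} w \<partial>lborel)"
    using N1 by (subst nn_integral_add[symmetric]) (measurable, auto intro!: nn_integral_cong split: split_indicator)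
  also have "(\<integral>\<^sup>+ u. ennreal (N ^ (n - 1) * exp (- N)) * indicator {N<..N * S} u \<partial>lborel) = ennreal (a * (S - 1))"
  proof -
    have "N ^ (n - 1) * exp (- N) * (N * S - N) = a * (S - 1)"
      unfolding a_def using n by (cases n) (auto simp: field_simps)
    then show ?thesis using NS N1 by (subst nn_integral_cmult_indicator) (auto simp: ennreal_mult'[symmetric])
  qed
  also have "(\<integral>\<^sup>+ w. ennreal (w ^ (n - 1) * exp (- w)) * indicator {0..} w \<partial>lborel) + ennreal (a * (S - 1))
      \<le> ennreal C + ennreal (C * (S - 1))"
    using nn_integral_Gamma_le_c_rt_numerator[OF n] n_power_exp_le_c_rt_numerator[OF n] S
    unfolding C_def a_def N_def by (intro add_mono ennreal_leI mult_right_mono) auto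
  also have "ennreal C + ennreal (C * (S - 1)) = ennreal (C * S)"
    using C0 S mult_left_mono[of 1 S C] by (subst ennreal_plus[symmetric]) (auto simp: algebra_simps)
  also have "ennreal (1 / pi ^ n) * ennreal (C * S) = ennreal (C * S / pi ^ n)"
    by (subst ennreal_mult'[symmetric]) simp_all
  finally show ?thesis
    unfolding C_def by (simp add: mult_left_mono)
qed

subsection \<open>Integrals of radial functions\<close>

lemma emeasure_lborel_cmod_sq_le:
  "emeasure (lborel::complex measure) {z. (cmod z)\<^sup>2 \<le> b} = ennreal (pi * max b 0)"
proof (cases "b \<ge> 0")
  case True
  have "{z::complex. (cmod z)\<^sup>2 \<le> b} = cball 0 (sqrt b)"
    using True by (auto simp: real_le_rsqrt dist_norm) (metis norm_ge_zero real_sqrt_le_iff real_sqrt_unique)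
  also have "emeasure lborel (cball (0::complex) (sqrt b)) =
      ennreal (unit_ball_vol (real DIM(complex)) * sqrt b ^ DIM(complex))"
    using True by (intro emeasure_cball) simp
  also have "unit_ball_vol (real DIM(complex)) * sqrt b ^ DIM(complex) = pi * max b 0"
    using True by (simp add: unit_ball_vol_2)
  finally show ?thesis .
next
  case False
  then have "{z::complex. (cmod z)\<^sup>2 \<le> b} = {}"
    by (auto simp: not_le) (smt (verit) zero_le_power2)
  then show ?thesis using False by simp
qed

lemma distr_lborel_cmod_sq:
  "distr (lborel::complex measure) borel (\<lambda>z. (cmod z)\<^sup>2) = density lborel (\<lambda>u. ennreal pi * indicator {0..} u)"
proof -
  define M1 where "M1 = distr (lborel::complex measure) borel (\<lambda>z. (cmod z)\<^sup>2)"
  define M2 where "M2 = density (lborel::real measure) (\<lambda>u. ennreal pi * indicator {0..} u)"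
  have M1b: "emeasure M1 {..b} = ennreal (pi * max b 0)" for b
    unfolding M1_def emeasure_lborel_cmod_sq_le[symmetric]
    by (subst emeasure_distr) (auto intro!: arg_cong2[where f=emeasure])
  have M2b: "emeasure M2 {..b} = ennreal (pi * max b 0)" for b
  proof -
    have "emeasure M2 {..b} = (\<integral>\<^sup>+ u. ennreal pi * indicator {0..b} u \<partial>lborel)"
      unfolding M2_def by (subst emeasure_density) (auto intro!: nn_integral_cong split: split_indicator)
    also have "\<dots> = ennreal pi * emeasure lborel {0..b}"
      by (subst nn_integral_cmult) auto
    also have "\<dots> = ennreal (pi * max b 0)"
      by (cases "b \<ge> 0") (auto simp: ennreal_mult)
    finally show ?thesis .
  qed
  show ?thesis unfolding M1_def[symmetric] M2_def[symmetric]
  proof (rule measure_eqI_generator_eq[where \<Omega>=UNIV and E="range atMost" and A="\<lambda>i. {..real i}"])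
    show "Int_stable (range atMost :: real set set)"
      by (auto simp: Int_stable_def)
    show "sets M1 = sigma_sets UNIV (range atMost)" unfolding M1_def
      by (simp add: borel_eq_atMost)
    show "sets M2 = sigma_sets UNIV (range atMost)" unfolding M2_def
      by (simp add: borel_eq_atMost)
    show "\<And>X. X \<in> range atMost \<Longrightarrow> emeasure M1 X = emeasure M2 X"
      using M1b M2b by auto
    show "emeasure M1 {..real i} \<noteq> \<infinity>" for i using M1b by simp
    show "(\<Union>i. {..real i}) = UNIV" by (auto intro: real_arch_simple)
  qed auto
qed

lemma nn_integral_lborel_cmod_sq:
  fixes F :: "real \<Rightarrow> ennreal"
  assumes Fm[measurable]: "F \<in> borel_measurable borel"
  shows "(\<integral>\<^sup>+ z. F ((cmod z)\<^sup>2) \<partial>(lborel::complex measure)) = ennreal pi * (\<integral>\<^sup>+ u. F u * indicator {0..} u \<partial>lborel)"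
proof -
  have "(\<integral>\<^sup>+ z. F ((cmod z)\<^sup>2) \<partial>(lborel::complex measure)) =
      integral\<^sup>N (distr lborel borel (\<lambda>z::complex. (cmod z)\<^sup>2)) F"
    by (subst nn_integral_distr) auto
  also have "\<dots> = (\<integral>\<^sup>+ u. ennreal pi * (F u * indicator {0..} u) \<partial>lborel)"
    unfolding distr_lborel_cmod_sq by (subst nn_integral_density) (auto intro!: nn_integral_cong simp: ac_simps)
  also have "\<dots> = ennreal pi * (\<integral>\<^sup>+ u. F u * indicator {0..} u \<partial>lborel)"
    by (rule nn_integral_cmult) auto
  finally show ?thesis .
qed

lemma nn_integral_power_diff_Icc:
  assumes k: "k \<ge> 1"
  shows "(\<integral>\<^sup>+ v. ennreal ((w - v) ^ (k - 1)) * indicator {0..w} v \<partial>lborel) = ennreal (w ^ k / real k) * indicator {0..} w"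
proof (cases "w \<ge> 0")
  case True
  have "(\<integral>\<^sup>+ v. ennreal ((w - v) ^ (k - 1)) * indicator {0..w} v \<partial>lborel)
      = ennreal ((\<lambda>v. - ((w - v) ^ k / real k)) w - (\<lambda>v. - ((w - v) ^ k / real k)) 0)"
  proof (rule nn_integral_FTC_Icc)
    fix x assume "x \<in> {0..w}"
    show "((\<lambda>v. - ((w - v) ^ k / real k)) has_real_derivative (w - x) ^ (k - 1)) (at x)"
      using k by (auto intro!: derivative_eq_intros simp: field_simps)
    show "0 \<le> (w - x) ^ (k - 1)" using \<open>x \<in> {0..w}\<close> by simp
  qed (use True in auto)
  also have "\<dots> = ennreal (w ^ k / real k) * indicator {0..} w"
    using True k by (simp add: power_0_left)
  finally show ?thesis .
next
  case False
  then have "{0..w} = {}" by auto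
  then show ?thesis using False by simp
qed

lemma nn_integral_Ici_shift_power:
  fixes G :: "real \<Rightarrow> ennreal"
  assumes Gm[measurable]: "G \<in> borel_measurable borel" and k: "k \<ge> 1"
  shows "(\<integral>\<^sup>+ v. indicator {0..} v * (\<integral>\<^sup>+ u. G (v + u) * ennreal (u ^ (k - 1)) * indicator {0..} u \<partial>lborel) \<partial>lborel)
       = ennreal (1 / real k) * (\<integral>\<^sup>+ w. G w * ennreal (w ^ k) * indicator {0..} w \<partial>lborel)"
proof -
  have [measurable]: "Measurable.pred (borel \<Otimes>\<^sub>M borel) (\<lambda>x::real\<times>real. fst x \<in> {snd x..})"
    unfolding atLeast_iff by measurable
  have inner: "(\<integral>\<^sup>+ u. G (v + u) * ennreal (u ^ (k - 1)) * indicator {0..} u \<partial>lborel)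
      = (\<integral>\<^sup>+ w. G w * ennreal ((w - v) ^ (k - 1)) * indicator {v..} w \<partial>lborel)" for v
  proof -
    have "(\<integral>\<^sup>+ w. G w * ennreal ((w - v) ^ (k - 1)) * indicator {v..} w \<partial>lborel)
        = (\<integral>\<^sup>+ x. G (v + 1 * x) * ennreal ((v + 1 * x - v) ^ (k - 1)) * indicator {v..} (v + 1 * x) \<partial>lborel)"
      using nn_integral_real_affine[of "\<lambda>w. G w * ennreal ((w - v) ^ (k - 1)) * indicator {v..} w" 1 v]
      by simp
    also have "\<dots> = (\<integral>\<^sup>+ u. G (v + u) * ennreal (u ^ (k - 1)) * indicator {0..} u \<partial>lborel)"
      by (auto intro!: nn_integral_cong split: split_indicator)
    finally show ?thesis by simp
  qed
  have "(\<integral>\<^sup>+ v. indicator {0..} v * (\<integral>\<^sup>+ u. G (v + u) * ennreal (u ^ (k - 1)) * indicator {0..} u \<partial>lborel) \<partial>lborel)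
      = (\<integral>\<^sup>+ v. \<integral>\<^sup>+ w. indicator {0..} v * (G w * ennreal ((w - v) ^ (k - 1)) * indicator {v..} w) \<partial>lborel \<partial>lborel)"
    by (simp only: inner) (intro nn_integral_cong, subst nn_integral_cmult[symmetric], auto)
  also have "\<dots> = (\<integral>\<^sup>+ w. \<integral>\<^sup>+ v. indicator {0..} v * (G w * ennreal ((w - v) ^ (k - 1)) * indicator {v..} w) \<partial>lborel \<partial>lborel)"
    by (rule lborel_pair.Fubini') measurable
  also have "\<dots> = (\<integral>\<^sup>+ w. G w * ennreal (w ^ k / real k) * indicator {0..} w \<partial>lborel)"
  proof (rule nn_integral_cong)
    fix w :: real
    have "(\<integral>\<^sup>+ v. indicator {0..} v * (G w * ennreal ((w - v) ^ (k - 1)) * indicator {v..} w) \<partial>lborel)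
        = G w * (\<integral>\<^sup>+ v. ennreal ((w - v) ^ (k - 1)) * indicator {0..w} v \<partial>lborel)"
      by (subst nn_integral_cmult[symmetric]) (auto intro!: nn_integral_cong split: split_indicator)
    also note nn_integral_power_diff_Icc[OF k]
    finally show "(\<integral>\<^sup>+ v. indicator {0..} v * (G w * ennreal ((w - v) ^ (k - 1)) * indicator {v..} w) \<partial>lborel)
       = G w * ennreal (w ^ k / real k) * indicator {0..} w"
      by (simp add: mult.assoc)
  qed
  also have "\<dots> = (\<integral>\<^sup>+ w. ennreal (1 / real k) * (G w * ennreal (w ^ k) * indicator {0..} w) \<partial>lborel)"
    by (intro nn_integral_cong) (auto simp: ennreal_mult'[symmetric] ennreal_mult[symmetric] divide_inverse ac_simps split: split_indicator)
  also have "\<dots> = ennreal (1 / real k) * (\<integral>\<^sup>+ w. G w * ennreal (w ^ k) * indicator {0..} w \<partial>lborel)"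
    by (rule nn_integral_cmult) measurable
  finally show ?thesis .
qed

lemma product_sigma_finite_lborel: "product_sigma_finite (\<lambda>_::'i. lborel :: 'a::euclidean_space measure)"
  by (simp add: product_sigma_finite_def lborel.sigma_finite_measure_axioms)

lemma nn_integral_PiM_insert_cmod_sq:
  fixes B :: "'i set" and G :: "real \<Rightarrow> ennreal"
  assumes B: "finite B" "a \<notin> B" and Gm[measurable]: "G \<in> borel_measurable borel"
  shows "(\<integral>\<^sup>+ y. G (\<Sum>p\<in>insert a B. (cmod (y p))\<^sup>2) \<partial>PiM (insert a B) (\<lambda>_. lborel::complex measure))
    = ennreal pi * (\<integral>\<^sup>+ v. indicator {0..} v *
        (\<integral>\<^sup>+ y. G (v + (\<Sum>p\<in>B. (cmod (y p))\<^sup>2)) \<partial>PiM B (\<lambda>_. lborel)) \<partial>lborel)"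
proof -
  interpret product_sigma_finite "\<lambda>_::'i. lborel :: complex measure" by (rule product_sigma_finite_lborel)
  interpret PB: sigma_finite_measure "PiM B (\<lambda>_. lborel :: complex measure)"
    using B(1) by (rule sigma_finite)
  interpret pair_sigma_finite "PiM B (\<lambda>_. lborel :: complex measure)" "lborel :: real measure" ..
  define s where "s = (\<lambda>y::'i \<Rightarrow> complex. \<Sum>p\<in>B. (cmod (y p))\<^sup>2)"
  have sm[measurable]: "s \<in> borel_measurable (PiM B (\<lambda>_. lborel))" unfolding s_def by measurable
  have "(\<integral>\<^sup>+ y. G (\<Sum>p\<in>insert a B. (cmod (y p))\<^sup>2) \<partial>PiM (insert a B) (\<lambda>_. lborel::complex measure))
      = (\<integral>\<^sup>+ y. \<integral>\<^sup>+ z. G (\<Sum>p\<in>insert a B. (cmod ((y(a := z)) p))\<^sup>2) \<partial>lborel \<partial>PiM B (\<lambda>_. lborel))"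
    by (rule product_nn_integral_insert) (use B in auto)
  also have "\<dots> = (\<integral>\<^sup>+ y. \<integral>\<^sup>+ z. G ((cmod z)\<^sup>2 + s y) \<partial>lborel \<partial>PiM B (\<lambda>_. lborel))"
  proof (intro nn_integral_cong)
    fix y z
    have "(\<Sum>p\<in>B. (cmod ((y(a := z)) p))\<^sup>2) = s y"
      unfolding s_def using B(2) by (intro sum.cong) auto
    then show "G (\<Sum>p\<in>insert a B. (cmod ((y(a := z)) p))\<^sup>2) = G ((cmod z)\<^sup>2 + s y)"
      using B by simp
  qed
  also have "\<dots> = (\<integral>\<^sup>+ y. ennreal pi * (\<integral>\<^sup>+ v. G (v + s y) * indicator {0..} v \<partial>lborel) \<partial>PiM B (\<lambda>_. lborel))"
    by (intro nn_integral_cong nn_integral_lborel_cmod_sq[of "\<lambda>x. G (x + _)", simplified]) measurable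
  also have "\<dots> = ennreal pi * (\<integral>\<^sup>+ y. \<integral>\<^sup>+ v. G (v + s y) * indicator {0..} v \<partial>lborel \<partial>PiM B (\<lambda>_. lborel))"
    by (rule nn_integral_cmult) measurable
  also have "(\<integral>\<^sup>+ y. \<integral>\<^sup>+ v. G (v + s y) * indicator {0..} v \<partial>lborel \<partial>PiM B (\<lambda>_. lborel))
      = (\<integral>\<^sup>+ v. \<integral>\<^sup>+ y. G (v + s y) * indicator {0..} v \<partial>PiM B (\<lambda>_. lborel) \<partial>lborel)"
    by (rule Fubini'[symmetric]) measurable
  also have "\<dots> = (\<integral>\<^sup>+ v. indicator {0..} v * (\<integral>\<^sup>+ y. G (v + s y) \<partial>PiM B (\<lambda>_. lborel)) \<partial>lborel)"
    by (intro nn_integral_cong) (subst nn_integral_cmult[symmetric], measurable, simp add: ac_simps)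
  finally show ?thesis unfolding s_def .
qed

lemma nn_integral_PiM_sum_cmod_sq:
  fixes B :: "'i set" and G :: "real \<Rightarrow> ennreal"
  assumes "finite B" "B \<noteq> {}" "G \<in> borel_measurable borel"
  shows "(\<integral>\<^sup>+ y. G (\<Sum>p\<in>B. (cmod (y p))\<^sup>2) \<partial>PiM B (\<lambda>_. lborel::complex measure))
     = ennreal (pi ^ card B / fact (card B - 1)) * (\<integral>\<^sup>+ u. G u * ennreal (u ^ (card B - 1)) * indicator {0..} u \<partial>lborel)"
  using assms
proof (induction B arbitrary: G rule: finite_ne_induct)
  case (singleton a)
  interpret product_sigma_finite "\<lambda>_::'i. lborel :: complex measure" by (rule product_sigma_finite_lborel)
  note [measurable] = singleton
  have "(\<integral>\<^sup>+ y. G (\<Sum>p\<in>{a}. (cmod (y p))\<^sup>2) \<partial>PiM {a} (\<lambda>_. lborel::complex measure))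
      = (\<integral>\<^sup>+ z. G ((cmod z)\<^sup>2) \<partial>(lborel::complex measure))"
  proof -
    have m: "(\<lambda>z. G ((cmod z)\<^sup>2)) \<in> borel_measurable ((\<lambda>_::'i. lborel :: complex measure) a)" by measurable
    show ?thesis using product_nn_integral_singleton[OF m] by simp
  qed
  also have "\<dots> = ennreal pi * (\<integral>\<^sup>+ u. G u * indicator {0..} u \<partial>lborel)"
    by (rule nn_integral_lborel_cmod_sq) (use singleton in simp)
  finally show ?case by simp
next
next
  case (insert a B G)
  note Gm[measurable] = insert.prems
  define k where "k = card B"
  have k1: "k \<ge> 1" using insert(1,2) k_def by (simp add: Suc_leI card_gt_0_iff)
  have ck: "card (insert a B) = Suc k" using insert k_def by simp
  define I where "I = (\<integral>\<^sup>+ w. G w * ennreal (w ^ k) * indicator {0..} w \<partial>lborel)"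
  have IH: "(\<integral>\<^sup>+ y. G (v + (\<Sum>p\<in>B. (cmod (y p))\<^sup>2)) \<partial>PiM B (\<lambda>_. lborel)) =
      ennreal (pi ^ k / fact (k - 1)) * (\<integral>\<^sup>+ u. G (v + u) * ennreal (u ^ (k - 1)) * indicator {0..} u \<partial>lborel)" for v
    unfolding k_def by (rule insert.IH) measurable
  have "(\<integral>\<^sup>+ y. G (\<Sum>p\<in>insert a B. (cmod (y p))\<^sup>2) \<partial>PiM (insert a B) (\<lambda>_. lborel::complex measure))
      = ennreal pi * (\<integral>\<^sup>+ v. indicator {0..} v * (ennreal (pi ^ k / fact (k - 1)) *
          (\<integral>\<^sup>+ u. G (v + u) * ennreal (u ^ (k - 1)) * indicator {0..} u \<partial>lborel)) \<partial>lborel)"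
    unfolding nn_integral_PiM_insert_cmod_sq[OF insert(1,3) Gm] IH ..
  also have "\<dots> = ennreal pi * (ennreal (pi ^ k / fact (k - 1)) * (ennreal (1 / real k) * I))"
    unfolding I_def nn_integral_Ici_shift_power[OF Gm k1, symmetric]
    by (subst nn_integral_cmult[symmetric]) (measurable, simp add: ac_simps)
  also have "\<dots> = ennreal (pi * (pi ^ k / fact (k - 1) * (1 / real k))) * I"
    by (simp only: mult.assoc[symmetric] ennreal_mult[symmetric] divide_nonneg_nonneg zero_le_power
        pi_ge_zero fact_ge_zero of_nat_0_le_iff mult_nonneg_nonneg zero_le_one)
  also have "pi * (pi ^ k / fact (k - 1) * (1 / real k)) = pi ^ Suc k / fact k"
    using k1 by (cases k) (auto simp: field_simps)
  finally show ?case unfolding ck I_def by simp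
qed

lemma sum_Times_singleton: "(\<Sum>p\<in>I \<times> {j}. g p) = (\<Sum>k\<in>I. g (k, j))"
proof -
  have "I \<times> {j} = (\<lambda>k. (k, j)) ` I" by auto
  then show ?thesis by (simp add: sum.reindex inj_on_def)
qed

lemma borel_measurable_prod_columns:
  fixes h :: "'j \<Rightarrow> real \<Rightarrow> ennreal"
  assumes [measurable]: "\<And>i. h i \<in> borel_measurable borel"
  shows "(\<lambda>Y. \<Prod>i\<in>J. h i (\<Sum>k\<in>I. (cmod (Y (k, i)))\<^sup>2)) \<in> borel_measurable (PiM (I \<times> J) (\<lambda>_. lborel :: complex measure))"
  by measurable

lemma nn_integral_PiM_prod_columns:
  fixes I J :: "nat set" and hi :: "nat \<Rightarrow> real \<Rightarrow> ennreal"
  assumes I: "finite I" and J: "finite J" and hm: "\<And>i. hi i \<in> borel_measurable borel"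
  shows "(\<integral>\<^sup>+ Y. (\<Prod>i\<in>J. hi i (\<Sum>k\<in>I. (cmod (Y (k,i)))\<^sup>2)) \<partial>PiM (I \<times> J) (\<lambda>_. lborel::complex measure))
       = (\<Prod>i\<in>J. \<integral>\<^sup>+ Y. hi i (\<Sum>p\<in>I \<times> {i}. (cmod (Y p))\<^sup>2) \<partial>PiM (I \<times> {i}) (\<lambda>_. lborel::complex measure))"
  using J
proof (induction J rule: finite_induct)
  case empty
  show ?case by (simp add: PiM_empty)
next
  case (insert j J)
  interpret product_sigma_finite "\<lambda>_::nat\<times>nat. lborel :: complex measure" by (rule product_sigma_finite_lborel)
  note [measurable] = hm
  have un: "I \<times> insert j J = (I \<times> {j}) \<union> (I \<times> J)" by auto
  have dis: "(I \<times> {j}) \<inter> (I \<times> J) = {}" using insert by auto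
  define A where "A = (\<lambda>x::nat\<times>nat\<Rightarrow>complex. hi j (\<Sum>k\<in>I. (cmod (x (k,j)))\<^sup>2))"
  define B where "B = (\<lambda>y::nat\<times>nat\<Rightarrow>complex. (\<Prod>i\<in>J. hi i (\<Sum>k\<in>I. (cmod (y (k,i)))\<^sup>2)))"
  have Am[measurable]: "A \<in> borel_measurable (PiM (I \<times> {j}) (\<lambda>_. lborel))"
    unfolding A_def by measurable
  have Bm[measurable]: "B \<in> borel_measurable (PiM (I \<times> J) (\<lambda>_. lborel))"
    unfolding B_def by (rule borel_measurable_prod_columns) measurable
  have "(\<integral>\<^sup>+ Y. (\<Prod>i\<in>insert j J. hi i (\<Sum>k\<in>I. (cmod (Y (k,i)))\<^sup>2)) \<partial>PiM (I \<times> insert j J) (\<lambda>_. lborel::complex measure))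
      = (\<integral>\<^sup>+ Y. (\<Prod>i\<in>insert j J. hi i (\<Sum>k\<in>I. (cmod (Y (k,i)))\<^sup>2)) \<partial>PiM ((I \<times> {j}) \<union> (I \<times> J)) (\<lambda>_. lborel::complex measure))"
    by (simp only: un)
  also have "\<dots> = (\<integral>\<^sup>+ x. \<integral>\<^sup>+ y. (\<Prod>i\<in>insert j J. hi i (\<Sum>k\<in>I. (cmod (merge (I \<times> {j}) (I \<times> J) (x, y) (k,i)))\<^sup>2))
        \<partial>PiM (I \<times> J) (\<lambda>_. lborel) \<partial>PiM (I \<times> {j}) (\<lambda>_. lborel))"
    by (rule product_nn_integral_fold) (use dis I insert in \<open>auto\<close>)
  also have "\<dots> = (\<integral>\<^sup>+ x. \<integral>\<^sup>+ y. A x * B y \<partial>PiM (I \<times> J) (\<lambda>_. lborel) \<partial>PiM (I \<times> {j}) (\<lambda>_. lborel))"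
  proof (intro nn_integral_cong)
    fix x y :: "nat \<times> nat \<Rightarrow> complex"
    have "(\<Prod>i\<in>insert j J. hi i (\<Sum>k\<in>I. (cmod (merge (I \<times> {j}) (I \<times> J) (x, y) (k,i)))\<^sup>2))
        = hi j (\<Sum>k\<in>I. (cmod (merge (I \<times> {j}) (I \<times> J) (x, y) (k,j)))\<^sup>2) *
          (\<Prod>i\<in>J. hi i (\<Sum>k\<in>I. (cmod (merge (I \<times> {j}) (I \<times> J) (x, y) (k,i)))\<^sup>2))"
      using insert by simp
    also have "hi j (\<Sum>k\<in>I. (cmod (merge (I \<times> {j}) (I \<times> J) (x, y) (k,j)))\<^sup>2) = A x"
      unfolding A_def using dis by (intro arg_cong[where f="hi j"] sum.cong) (auto simp: merge_apply)
    also have "(\<Prod>i\<in>J. hi i (\<Sum>k\<in>I. (cmod (merge (I \<times> {j}) (I \<times> J) (x, y) (k,i)))\<^sup>2)) = B y"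
      unfolding B_def using dis insert(2)
      by (intro prod.cong refl arg_cong[where f="hi _"] sum.cong) (auto simp: merge_apply)
    finally show "(\<Prod>i\<in>insert j J. hi i (\<Sum>k\<in>I. (cmod (merge (I \<times> {j}) (I \<times> J) (x, y) (k,i)))\<^sup>2)) = A x * B y" .
  qed
  also have "\<dots> = (\<integral>\<^sup>+ x. A x * (\<integral>\<^sup>+ y. B y \<partial>PiM (I \<times> J) (\<lambda>_. lborel)) \<partial>PiM (I \<times> {j}) (\<lambda>_. lborel))"
    by (intro nn_integral_cong nn_integral_cmult) measurable
  also have "\<dots> = (\<integral>\<^sup>+ x. A x \<partial>PiM (I \<times> {j}) (\<lambda>_. lborel)) * (\<integral>\<^sup>+ y. B y \<partial>PiM (I \<times> J) (\<lambda>_. lborel))"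
    by (rule nn_integral_multc) measurable
  also have "(\<integral>\<^sup>+ y. B y \<partial>PiM (I \<times> J) (\<lambda>_. lborel)) = (\<Prod>i\<in>J. \<integral>\<^sup>+ Y. hi i (\<Sum>p\<in>I \<times> {i}. (cmod (Y p))\<^sup>2) \<partial>PiM (I \<times> {i}) (\<lambda>_. lborel::complex measure))"
    unfolding B_def by (rule insert.IH)
  also have "(\<integral>\<^sup>+ x. A x \<partial>PiM (I \<times> {j}) (\<lambda>_. lborel)) = (\<integral>\<^sup>+ Y. hi j (\<Sum>p\<in>I \<times> {j}. (cmod (Y p))\<^sup>2) \<partial>PiM (I \<times> {j}) (\<lambda>_. lborel::complex measure))"
    unfolding A_def by (intro nn_integral_cong arg_cong[where f="hi j"]) (simp add: sum_Times_singleton)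
  finally show ?case using insert by simp
qed

lemma borel_measurable_prod_component_ennreal:
  fixes f :: "'i \<Rightarrow> 'a::euclidean_space \<Rightarrow> real"
  assumes [measurable]: "\<And>k. f k \<in> borel_measurable borel"
  shows "(\<lambda>Y. \<Prod>k\<in>K. ennreal (f k (Y k))) \<in> borel_measurable (PiM K (\<lambda>_. lborel))"
proof (rule borel_measurable_prod_ennreal)
  fix k assume "k \<in> K"
  then show "(\<lambda>Y. ennreal (f k (Y k))) \<in> borel_measurable (PiM K (\<lambda>_. lborel))"
    by (intro measurable_compose[OF measurable_component_singleton]) measurable
qed

lemma PiM_density_lborel:
  fixes f :: "'i \<Rightarrow> 'a::euclidean_space \<Rightarrow> real"
  assumes K: "finite K" and fm[measurable]: "\<And>k. f k \<in> borel_measurable borel"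
  shows "PiM K (\<lambda>k. density lborel (\<lambda>x. ennreal (f k x)))
         = density (PiM K (\<lambda>_. lborel)) (\<lambda>Y. \<Prod>k\<in>K. ennreal (f k (Y k)))"
proof -
  define M where "M = (\<lambda>k. density lborel (\<lambda>x. ennreal (f k x)))"
  have sf: "sigma_finite_measure (M k)" for k
    unfolding M_def by (subst sigma_finite_measure.sigma_finite_iff_density_finite[OF sigma_finite_lborel]) auto
  interpret product_sigma_finite M by (simp add: product_sigma_finite_def sf)
  interpret L: product_sigma_finite "\<lambda>_::'i. lborel :: 'a measure" by (rule product_sigma_finite_lborel)
  have setsM: "sets (M k) = sets lborel" for k unfolding M_def by simp
  have "density (PiM K (\<lambda>_. lborel)) (\<lambda>Y. \<Prod>k\<in>K. ennreal (f k (Y k))) = PiM K M"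
  proof (rule PiM_eqI[OF K])
    show "sets (density (PiM K (\<lambda>_. lborel)) (\<lambda>Y. \<Prod>k\<in>K. ennreal (f k (Y k)))) = sets (PiM K M)"
      by (simp add: setsM cong: sets_PiM_cong)
  next
    fix A assume A: "\<And>i. i \<in> K \<Longrightarrow> A i \<in> sets (M i)"
    have Am: "A i \<in> sets lborel" if "i \<in> K" for i using A[OF that] setsM by simp
    have PE: "PiE K A \<in> sets (PiM K (\<lambda>_. lborel :: 'a measure))"
      using Am by (intro sets_PiM_I_finite K) auto
    have "emeasure (density (PiM K (\<lambda>_. lborel)) (\<lambda>Y. \<Prod>k\<in>K. ennreal (f k (Y k)))) (PiE K A)
        = (\<integral>\<^sup>+ Y. (\<Prod>k\<in>K. ennreal (f k (Y k))) * indicator (PiE K A) Y \<partial>PiM K (\<lambda>_. lborel))"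
      by (intro emeasure_density PE borel_measurable_prod_component_ennreal fm)
    also have "\<dots> = (\<integral>\<^sup>+ Y. (\<Prod>k\<in>K. ennreal (f k (Y k)) * indicator (A k) (Y k)) \<partial>PiM K (\<lambda>_. lborel))"
    proof (rule nn_integral_cong)
      fix Y assume "Y \<in> space (PiM K (\<lambda>_. lborel :: 'a measure))"
      then have Ye: "Y \<in> extensional K" by (auto simp: space_PiM PiE_def)
      have "indicator (PiE K A) Y = (\<Prod>k\<in>K. indicator (A k) (Y k) :: ennreal)"
        using Ye K by (auto simp: indicator_def PiE_def Pi_def prod_zero_iff)
      then show "(\<Prod>k\<in>K. ennreal (f k (Y k))) * indicator (PiE K A) Y = (\<Prod>k\<in>K. ennreal (f k (Y k)) * indicator (A k) (Y k))"
        by (simp add: prod.distrib)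
    qed
    also have "\<dots> = (\<Prod>k\<in>K. \<integral>\<^sup>+ x. ennreal (f k x) * indicator (A k) x \<partial>lborel)"
      using Am by (intro L.product_nn_integral_prod K) (auto intro: borel_measurable_times_ennreal)
    also have "\<dots> = (\<Prod>k\<in>K. emeasure (M k) (A k))"
      unfolding M_def using Am by (intro prod.cong refl) (simp add: emeasure_density)
    finally show "emeasure (density (PiM K (\<lambda>_. lborel)) (\<lambda>Y. \<Prod>k\<in>K. ennreal (f k (Y k)))) (PiE K A)
        = (\<Prod>k\<in>K. emeasure (M k) (A k))" .
  qed
  then show ?thesis unfolding M_def by simp
qed

lemma nn_integral_gauss_envelope_column:
  assumes B: "finite B" "card B = n" and n: "n \<ge> 1" and S: "S \<ge> 1"
  shows "(\<integral>\<^sup>+ y. ennreal (gauss_envelope n S (\<Sum>p\<in>B. (cmod (y p))\<^sup>2)) \<partial>PiM B (\<lambda>_. lborel::complex measure))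
    \<le> ennreal (c_rt_factor n * S)"
proof -
  have "B \<noteq> {}" using B n by auto
  then have "(\<integral>\<^sup>+ y. ennreal (gauss_envelope n S (\<Sum>p\<in>B. (cmod (y p))\<^sup>2)) \<partial>PiM B (\<lambda>_. lborel::complex measure))
      = ennreal (pi ^ n / fact (n - 1)) *
        (\<integral>\<^sup>+ u. ennreal (gauss_envelope n S u) * ennreal (u ^ (n - 1)) * indicator {0..} u \<partial>lborel)"
    using nn_integral_PiM_sum_cmod_sq[of B "\<lambda>u. ennreal (gauss_envelope n S u)"] B by simp
  also have "\<dots> \<le> ennreal (pi ^ n / fact (n - 1)) * ennreal (c_rt_numerator n * S / pi ^ n)"
    by (intro mult_left_mono nn_integral_gauss_envelope_le n S) simp
  also have "\<dots> = ennreal (c_rt_factor n * S)"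
    using n by (subst ennreal_mult'[symmetric]) (auto simp: c_rt_factor_eq)
  finally show ?thesis .
qed

subsection \<open>The auxiliary channel\<close>

definition cgauss_pdf :: "real \<Rightarrow> complex \<Rightarrow> real" where
  "cgauss_pdf s z = exp (- (cmod z)\<^sup>2 / s) / (pi * s)"

definition aux_chan_pdf :: "nat \<Rightarrow> nat \<Rightarrow> complex mat \<Rightarrow> (nat \<Rightarrow> real) \<Rightarrow> (nat \<times> nat \<Rightarrow> complex) \<Rightarrow> ennreal"
  where "aux_chan_pdf n m x l Y =
    (\<Prod>p\<in>{..<n} \<times> {..<m}. ennreal (cgauss_pdf (1 + col_pow n x (snd p) * l (snd p)) (Y p)))"

lemma borel_measurable_cgauss_pdf[measurable]: "cgauss_pdf s \<in> borel_measurable borel"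
  unfolding cgauss_pdf_def by measurable

lemma borel_measurable_aux_chan_pdf:
  "aux_chan_pdf n m x l \<in> borel_measurable (PiM ({..<n} \<times> {..<m}) (\<lambda>_. lborel))"
  unfolding aux_chan_pdf_def by (rule borel_measurable_prod_component_ennreal) simp

lemma aux_chan_eq_density:
  "aux_chan n m x l = density (PiM ({..<n} \<times> {..<m}) (\<lambda>_. lborel)) (aux_chan_pdf n m x l)"
proof -
  have "aux_chan n m x l = PiM ({..<n} \<times> {..<m})
      (\<lambda>p. density lborel (\<lambda>z. ennreal (cgauss_pdf (1 + col_pow n x (snd p) * l (snd p)) z)))"
    unfolding aux_chan_def cgauss_def cgauss_pdf_def by (intro PiM_cong) auto
  also have "\<dots> = density (PiM ({..<n} \<times> {..<m}) (\<lambda>_. lborel)) (aux_chan_pdf n m x l)"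
    unfolding aux_chan_pdf_def by (intro PiM_density_lborel) auto
  finally show ?thesis .
qed

lemma col_pow_nonneg: "col_pow n x i \<ge> 0"
  unfolding col_pow_def by (intro divide_nonneg_nonneg sum_nonneg) auto

lemma prod_cgauss_pdf:
  assumes "finite I"
  shows "(\<Prod>k\<in>I. cgauss_pdf s (y k)) = exp (- (\<Sum>k\<in>I. (cmod (y k))\<^sup>2) / s) / (pi * s) ^ card I"
  using assms
  by (simp add: cgauss_pdf_def prod_dividef exp_sum[symmetric] sum_negf sum_divide_distrib)

lemma aux_chan_pdf_le_gauss_envelope:
  assumes n: "n \<ge> 1" and l: "\<And>i. i < m \<Longrightarrow> l i \<ge> 0"
    and S: "\<And>i. i < m \<Longrightarrow> 1 + col_pow n x i * l i \<le> S i"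
  shows "aux_chan_pdf n m x l Y \<le> (\<Prod>i<m. ennreal (gauss_envelope n (S i) (\<Sum>k<n. (cmod (Y (k, i)))\<^sup>2)))"
proof -
  define s where "s i = 1 + col_pow n x i * l i" for i
  have s1: "1 \<le> s i" if "i < m" for i
    unfolding s_def using l[OF that] col_pow_nonneg[of n x i] by simp
  have "aux_chan_pdf n m x l Y = (\<Prod>(k, i)\<in>{..<n} \<times> {..<m}. ennreal (cgauss_pdf (s i) (Y (k, i))))"
    unfolding aux_chan_pdf_def s_def by (intro prod.cong) auto
  also have "\<dots> = (\<Prod>i<m. \<Prod>k<n. ennreal (cgauss_pdf (s i) (Y (k, i))))"
    by (simp only: prod.cartesian_product[symmetric]) (rule prod.swap)
  also have "\<dots> \<le> (\<Prod>i<m. ennreal (gauss_envelope n (S i) (\<Sum>k<n. (cmod (Y (k, i)))\<^sup>2)))"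
  proof (rule prod_mono_ennreal)
    fix i assume "i \<in> {..<m}"
    then have i: "i < m" by simp
    have "(\<Prod>k<n. ennreal (cgauss_pdf (s i) (Y (k, i)))) = ennreal (\<Prod>k<n. cgauss_pdf (s i) (Y (k, i)))"
      using s1[OF i] by (intro prod_ennreal) (simp add: cgauss_pdf_def)
    also have "\<dots> = ennreal (exp (- (\<Sum>k<n. (cmod (Y (k, i)))\<^sup>2) / s i) / (pi * s i) ^ n)"
      by (simp add: prod_cgauss_pdf)
    also have "\<dots> \<le> ennreal (gauss_envelope n (S i) (\<Sum>k<n. (cmod (Y (k, i)))\<^sup>2))"
      using S[OF i] s1[OF i] unfolding s_def
      by (intro ennreal_leI cgauss_power_density_le_gauss_envelope n) (auto intro: sum_nonneg)
    finally show "(\<Prod>k<n. ennreal (cgauss_pdf (s i) (Y (k, i)))) \<le> \<dots>" .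
  qed
  finally show ?thesis .
qed

lemma nn_integral_gauss_envelope_columns_le:
  assumes n: "n \<ge> 1" and S: "\<And>i. i < m \<Longrightarrow> S i \<ge> 1"
  shows "(\<integral>\<^sup>+ Y. (\<Prod>i<m. ennreal (gauss_envelope n (S i) (\<Sum>k<n. (cmod (Y (k, i)))\<^sup>2)))
      \<partial>PiM ({..<n} \<times> {..<m}) (\<lambda>_. lborel)) \<le> ennreal (c_rt_factor n ^ m * (\<Prod>i<m. S i))"
proof -
  have "(\<integral>\<^sup>+ Y. (\<Prod>i<m. ennreal (gauss_envelope n (S i) (\<Sum>k<n. (cmod (Y (k, i)))\<^sup>2)))
      \<partial>PiM ({..<n} \<times> {..<m}) (\<lambda>_. lborel)) =
      (\<Prod>i<m. \<integral>\<^sup>+ Y. ennreal (gauss_envelope n (S i) (\<Sum>p\<in>{..<n} \<times> {i}. (cmod (Y p))\<^sup>2))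
        \<partial>PiM ({..<n} \<times> {i}) (\<lambda>_. lborel))"
    by (rule nn_integral_PiM_prod_columns) auto
  also have "\<dots> \<le> (\<Prod>i<m. ennreal (c_rt_factor n * S i))"
    using n S by (intro prod_mono_ennreal nn_integral_gauss_envelope_column)
      (auto simp: card_cartesian_product)
  also have "\<dots> = ennreal (c_rt_factor n ^ m * (\<Prod>i<m. S i))"
  proof -
    have "0 \<le> c_rt_factor n * S i" if "i < m" for i
      using S[OF that] c_rt_factor_nonneg[of n] by simp
    then show ?thesis by (subst prod_ennreal) (auto simp: prod.distrib)
  qed
  finally show ?thesis .
qed

text \<open>Disjointness of the decoding regions is all that is used about the decoder.\<close>
lemma sum_emeasure_density_decision_le:
  assumes J: "finite J" and g: "g \<in> measurable N (count_space UNIV)"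
    and d: "\<And>j. j \<in> J \<Longrightarrow> d j \<in> borel_measurable N" and D: "D \<in> borel_measurable N"
    and d_le: "\<And>j x. j \<in> J \<Longrightarrow> x \<in> space N \<Longrightarrow> d j x \<le> D x"
  shows "(\<Sum>j\<in>J. emeasure (density N (d j)) {x \<in> space N. g x = j}) \<le> (\<integral>\<^sup>+ x. D x \<partial>N)"
proof -
  define A where "A j = {x \<in> space N. g x = j}" for j
  have A: "A j \<in> sets N" for j
    unfolding A_def using measurable_sets[OF g, of "{j}"] by (simp add: vimage_def Int_def conj_commute)
  have "(\<Sum>j\<in>J. emeasure (density N (d j)) (A j)) = (\<Sum>j\<in>J. \<integral>\<^sup>+ x. d j x * indicator (A j) x \<partial>N)"
    using A d by (intro sum.cong refl emeasure_density) auto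
  also have "\<dots> \<le> (\<Sum>j\<in>J. \<integral>\<^sup>+ x. D x * indicator (A j) x \<partial>N)"
    using d_le by (intro sum_mono nn_integral_mono mult_right_mono) auto
  also have "\<dots> = (\<integral>\<^sup>+ x. (\<Sum>j\<in>J. D x * indicator (A j) x) \<partial>N)"
    using A D by (intro nn_integral_sum[symmetric]) auto
  also have "\<dots> \<le> (\<integral>\<^sup>+ x. D x \<partial>N)"
  proof (intro nn_integral_mono)
    fix x
    have "(\<Sum>j\<in>J. indicator (A j) x :: ennreal) = (\<Sum>j\<in>J. if j = g x then indicator (A j) x else 0)"
      unfolding A_def by (intro sum.cong) (auto split: split_indicator)
    also have "\<dots> \<le> 1" using J by (simp add: sum.delta' indicator_def)
    finally show "(\<Sum>j\<in>J. D x * indicator (A j) x) \<le> D x"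
      by (metis sum_distrib_left mult.right_neutral mult_left_mono zero_le)
  qed
  finally show ?thesis unfolding A_def .
qed

lemma aux_chan_success_sum_le:
  fixes x :: "nat \<Rightarrow> complex mat" and g :: "(nat \<times> nat \<Rightarrow> complex) \<times> (nat \<Rightarrow> real) \<Rightarrow> nat"
  assumes n: "n \<ge> 1" and \<rho>: "\<rho> \<ge> 0" and l: "l \<in> {..<m} \<rightarrow>\<^sub>E {0..}" and J: "finite J"
    and x_pow: "\<And>j. j \<in> J \<Longrightarrow> (\<Sum>i<m. \<Sum>k<n. (cmod (x j $$ (k, i)))\<^sup>2) \<le> real n * \<rho>"
    and g_meas: "g \<in> measurable (PiM ({..<n} \<times> {..<m}) (\<lambda>_. borel) \<Otimes>\<^sub>M PiM {..<m} (\<lambda>_. borel))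
                   (count_space UNIV)"
  shows "(\<Sum>j\<in>J. emeasure (aux_chan n m (x j) l) {Y \<in> space (aux_chan n m (x j) l). g (Y, l) = j})
    \<le> ennreal (c_rt_factor n ^ m * (\<Prod>i<m. 1 + \<rho> * l i))"
proof -
  define N where "N = PiM ({..<n} \<times> {..<m}) (\<lambda>_. lborel :: complex measure)"
  define S where "S i = 1 + \<rho> * l i" for i
  define D where "D Y = (\<Prod>i<m. ennreal (gauss_envelope n (S i) (\<Sum>k<n. (cmod (Y (k, i)))\<^sup>2)))" for Y
  have l0: "l i \<ge> 0" if "i < m" for i using l that by auto
  have col_pow_le: "1 + col_pow n (x j) i * l i \<le> S i" if "j \<in> J" "i < m" for j i
  proof -
    have "(\<Sum>k<n. (cmod (x j $$ (k, i)))\<^sup>2) \<le> (\<Sum>i'<m. \<Sum>k<n. (cmod (x j $$ (k, i')))\<^sup>2)"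
      using that(2) by (intro member_le_sum) (auto intro: sum_nonneg)
    also have "\<dots> \<le> real n * \<rho>" using x_pow[OF that(1)] .
    finally have "col_pow n (x j) i \<le> \<rho>"
      unfolding col_pow_def using n by (simp add: divide_le_eq mult.commute)
    then show ?thesis unfolding S_def using l0[OF that(2)] by (simp add: mult_right_mono)
  qed
  have "l \<in> space (PiM {..<m} (\<lambda>_. borel :: real measure))" using l by (auto simp: space_PiM)
  then have "(\<lambda>Y. g (Y, l)) \<in> measurable N (count_space UNIV)"
    unfolding N_def using measurable_Pair1[OF g_meas]
    by (subst measurable_cong_sets[OF sets_PiM_cong refl]) auto
  moreover have "D \<in> borel_measurable N"
    unfolding D_def N_def by (rule borel_measurable_prod_columns) simp
  ultimately have "(\<Sum>j\<in>J. emeasure (density N (aux_chan_pdf n m (x j) l)) {Y \<in> space N. g (Y, l) = j})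
      \<le> (\<integral>\<^sup>+ Y. D Y \<partial>N)"
    using J col_pow_le l0 n unfolding N_def D_def
    by (intro sum_emeasure_density_decision_le borel_measurable_aux_chan_pdf aux_chan_pdf_le_gauss_envelope)
  also have "\<dots> \<le> ennreal (c_rt_factor n ^ m * (\<Prod>i<m. S i))"
    unfolding N_def D_def using n \<rho> l0 by (intro nn_integral_gauss_envelope_columns_le) (auto simp: S_def)
  finally show ?thesis unfolding N_def S_def aux_chan_eq_density by simp
qed

subsection \<open>Eigenvalues of \<open>H H\<^sup>H\<close>\<close>

lemma mat_adjoint_carrier: "H \<in> carrier_mat t r \<Longrightarrow> mat_adjoint H \<in> carrier_mat r t"
  unfolding mat_adjoint_def by auto

lemma mat_adjoint_index:
  "H \<in> carrier_mat t r \<Longrightarrow> k < r \<Longrightarrow> j < t \<Longrightarrow> mat_adjoint H $$ (k, j) = cnj (H $$ (j, k))"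
  unfolding mat_adjoint_def by (auto simp: mat_of_rows_index)

lemma mult_adjoint_index:
  assumes "H \<in> carrier_mat t r" "i < t" "j < t"
  shows "(H * mat_adjoint H) $$ (i, j) = (\<Sum>k<r. H $$ (i, k) * cnj (H $$ (j, k)))"
  using assms mat_adjoint_carrier[OF assms(1)]
  by (auto simp: scalar_prod_def mat_adjoint_index atLeast0LessThan intro!: sum.cong)

lemma cnj_mult_self: "cnj z * z = complex_of_real ((cmod z)\<^sup>2)"
  by (simp only: complex_norm_square mult.commute)

lemma quadratic_form_mult_adjoint:
  assumes H: "H \<in> carrier_mat t r"
  shows "(\<Sum>i<t. cnj (v i) * (\<Sum>j<t. (H * mat_adjoint H) $$ (i, j) * v j)) =
    complex_of_real (\<Sum>k<r. (cmod (\<Sum>j<t. cnj (H $$ (j, k)) * v j))\<^sup>2)"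
proof -
  define w where "w k = (\<Sum>j<t. cnj (H $$ (j, k)) * v j)" for k
  have "(\<Sum>i<t. cnj (v i) * (\<Sum>j<t. (H * mat_adjoint H) $$ (i, j) * v j))
      = (\<Sum>i<t. \<Sum>j<t. \<Sum>k<r. cnj (v i) * H $$ (i, k) * cnj (H $$ (j, k)) * v j)"
    using H by (simp add: mult_adjoint_index sum_distrib_left sum_distrib_right ac_simps)
  also have "\<dots> = (\<Sum>k<r. \<Sum>i<t. \<Sum>j<t. cnj (v i) * H $$ (i, k) * cnj (H $$ (j, k)) * v j)"
    by (subst sum.swap) (simp add: sum.swap[of _ "{..<t}" "{..<r}"])
  also have "\<dots> = (\<Sum>k<r. cnj (w k) * w k)"
    unfolding w_def by (simp add: sum_distrib_left sum_distrib_right ac_simps)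
  also have "\<dots> = complex_of_real (\<Sum>k<r. (cmod (w k))\<^sup>2)"
    unfolding cnj_mult_self of_real_sum ..
  finally show ?thesis unfolding w_def .
qed

text \<open>If \<open>H H\<^sup>H v = \<mu> v\<close> with \<open>v \<noteq> 0\<close>, then \<open>\<mu> \<parallel>v\<parallel>\<^sup>2 = \<parallel>H\<^sup>H v\<parallel>\<^sup>2\<close>.\<close>
lemma mult_adjoint_root_real_nonneg:
  assumes H: "H \<in> carrier_mat t r" and root: "poly (char_poly (H * mat_adjoint H)) \<mu> = 0"
  shows "\<mu> = complex_of_real (Re \<mu>) \<and> Re \<mu> \<ge> 0"
proof -
  define A where "A = H * mat_adjoint H"
  have A: "A \<in> carrier_mat t t" unfolding A_def using H mat_adjoint_carrier[OF H] by auto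
  have "eigenvalue A \<mu>" using root eigenvalue_root_char_poly[OF A] unfolding A_def by simp
  then obtain v where v: "v \<in> carrier_vec t" "v \<noteq> 0\<^sub>v t" "A *\<^sub>v v = \<mu> \<cdot>\<^sub>v v"
    unfolding eigenvalue_def eigenvector_def using A by auto
  define N where "N = (\<Sum>i<t. (cmod (v $ i))\<^sup>2)"
  define Q where "Q = (\<Sum>k<r. (cmod (\<Sum>j<t. cnj (H $$ (j, k)) * v $ j))\<^sup>2)"
  have Av: "(\<Sum>j<t. A $$ (i, j) * v $ j) = \<mu> * v $ i" if "i < t" for i
  proof -
    have "(A *\<^sub>v v) $ i = \<mu> * v $ i" using v(3) that v(1) by simp
    then show ?thesis using that A v(1) by (simp add: scalar_prod_def atLeast0LessThan)
  qed
  have "\<mu> * complex_of_real N = (\<Sum>i<t. \<mu> * (cnj (v $ i) * v $ i))"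
    unfolding N_def cnj_mult_self of_real_sum by (rule sum_distrib_left)
  also have "\<dots> = (\<Sum>i<t. cnj (v $ i) * (\<Sum>j<t. A $$ (i, j) * v $ j))"
    by (intro sum.cong refl) (simp add: Av)
  also have "\<dots> = complex_of_real Q"
    unfolding A_def Q_def by (rule quadratic_form_mult_adjoint[OF H])
  finally have eq: "\<mu> * complex_of_real N = complex_of_real Q" .
  obtain i where i: "i < t" "v $ i \<noteq> 0" using v(1,2) by (auto simp: vec_eq_iff)
  have "0 < (cmod (v $ i))\<^sup>2" using i by simp
  also have "\<dots> \<le> N" unfolding N_def by (rule member_le_sum) (use i in auto)
  finally have "0 < N" .
  then have "\<mu> = complex_of_real (Q / N)"
    using eq by (simp add: field_simps)
  moreover have "Q / N \<ge> 0" using \<open>0 < N\<close> unfolding Q_def by (simp add: sum_nonneg)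
  ultimately show ?thesis by simp
qed

lemma det_one_plus_smult:
  fixes c :: complex
  assumes A: "A \<in> carrier_mat t t" and c: "c \<noteq> 0"
  shows "det (1\<^sub>m t + c \<cdot>\<^sub>m A) = (\<Prod>\<mu>\<in>#proots (char_poly A). 1 + c * \<mu>)"
proof -
  define cp where "cp = char_poly A"
  have deg: "degree cp = t" and lc: "coeff cp t = 1" using degree_monic_char_poly[OF A] cp_def by auto
  have cp: "cp = (\<Prod>x\<in>#proots cp. [:-x, 1:])"
    using complex_poly_decompose_multiset[of cp] deg lc by simp
  have size: "size (proots cp) = t" using size_proots_complex deg by simp
  define k where "k = - 1 / c"
  have "1\<^sub>m t + c \<cdot>\<^sub>m A = (- c) \<cdot>\<^sub>m (- char_matrix A k)"
    using A c by (intro eq_matI) (auto simp: char_matrix_def k_def field_simps)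
  then have "det (1\<^sub>m t + c \<cdot>\<^sub>m A) = (- c) ^ t * poly cp k"
    unfolding cp_def char_poly_matrix[OF A] using char_matrix_closed[OF A, of k] by simp
  also have "poly cp k = (\<Prod>x\<in>#proots cp. k - x)"
    by (subst cp) (simp add: poly_prod_mset)
  also have "(- c) ^ t * (\<Prod>x\<in>#proots cp. k - x) = (\<Prod>x\<in>#proots cp. (- c) * (k - x))"
    by (simp only: prod_mset.distrib prod_mset_constant size)
  also have "\<dots> = (\<Prod>x\<in>#proots cp. 1 + c * x)"
    using c by (intro arg_cong[where f=prod_mset] image_mset_cong) (auto simp: k_def field_simps)
  finally show ?thesis unfolding cp_def .
qed

lemma Re_det_one_plus_mult_adjoint:
  assumes H: "H \<in> carrier_mat t r" and \<rho>: "\<rho> \<noteq> 0"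
  shows "Re (det (1\<^sub>m t + complex_of_real \<rho> \<cdot>\<^sub>m (H * mat_adjoint H))) =
    (\<Prod>x\<in>#image_mset Re (proots (char_poly (H * mat_adjoint H))). 1 + \<rho> * x)"
proof -
  define R where "R = proots (char_poly (H * mat_adjoint H))"
  have "char_poly (H * mat_adjoint H) \<noteq> 0"
    using degree_monic_char_poly[of "H * mat_adjoint H" t] H mat_adjoint_carrier[OF H] by auto
  then have real: "\<mu> = complex_of_real (Re \<mu>)" if "\<mu> \<in># R" for \<mu>
    using mult_adjoint_root_real_nonneg[OF H] that unfolding R_def by auto
  have "det (1\<^sub>m t + complex_of_real \<rho> \<cdot>\<^sub>m (H * mat_adjoint H)) = (\<Prod>\<mu>\<in>#R. 1 + complex_of_real \<rho> * \<mu>)"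
    unfolding R_def using H mat_adjoint_carrier[OF H] \<rho> by (intro det_one_plus_smult) auto
  also have "\<dots> = (\<Prod>\<mu>\<in>#R. complex_of_real (1 + \<rho> * Re \<mu>))"
    by (intro arg_cong[where f=prod_mset] image_mset_cong) (metis real of_real_1 of_real_add of_real_mult)
  also have "\<dots> = complex_of_real (\<Prod>x\<in>#image_mset Re R. 1 + \<rho> * x)"
    by (simp add: of_real_hom.hom_prod_mset image_mset.compositionality comp_def)
  finally show ?thesis unfolding R_def by simp
qed

lemma eigenvalue_list_mult_adjoint:
  assumes H: "H \<in> carrier_mat t r"
  defines "L \<equiv> rev (sorted_list_of_multiset (image_mset Re (proots (char_poly (H * mat_adjoint H)))))"
  shows "length L = t" and "set L \<subseteq> {0..}"
    and "\<rho> \<noteq> 0 \<Longrightarrow> Re (det (1\<^sub>m t + complex_of_real \<rho> \<cdot>\<^sub>m (H * mat_adjoint H))) = (\<Prod>i<t. 1 + \<rho> * L ! i)"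
proof -
  define A where "A = H * mat_adjoint H"
  have A: "A \<in> carrier_mat t t" unfolding A_def using H mat_adjoint_carrier[OF H] by auto
  have mL: "mset L = image_mset Re (proots (char_poly A))" unfolding L_def A_def by simp
  show lenL: "length L = t"
    using size_proots_complex degree_monic_char_poly[OF A] by (metis mL size_image_mset size_mset)
  have "char_poly A \<noteq> 0" using degree_monic_char_poly[OF A] by auto
  then show "set L \<subseteq> {0..}"
    using mult_adjoint_root_real_nonneg[OF H] unfolding A_def L_def by auto
  assume "\<rho> \<noteq> 0"
  then have "Re (det (1\<^sub>m t + complex_of_real \<rho> \<cdot>\<^sub>m A)) = prod_list (map (\<lambda>x. 1 + \<rho> * x) L)"
    unfolding A_def using Re_det_one_plus_mult_adjoint[OF H]
    by (simp add: mL[unfolded A_def, symmetric] prod_mset_prod_list mset_map[symmetric] del: mset_map)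
  also have "\<dots> = (\<Prod>i<t. 1 + \<rho> * L ! i)"
    by (simp add: prod.list_conv_set_nth lenL atLeast0LessThan)
  finally show "Re (det (1\<^sub>m t + complex_of_real \<rho> \<cdot>\<^sub>m (H * mat_adjoint H))) = (\<Prod>i<t. 1 + \<rho> * L ! i)"
    unfolding A_def .
qed

lemma top_eigs_mult_adjoint_nonneg:
  assumes "H \<in> carrier_mat t r" "m \<le> t"
  shows "top_eigs m (H * mat_adjoint H) \<in> {..<m} \<rightarrow>\<^sub>E {0..}"
proof -
  define L where "L = rev (sorted_list_of_multiset (image_mset Re (proots (char_poly (H * mat_adjoint H)))))"
  note L = eigenvalue_list_mult_adjoint(1,2)[OF assms(1), folded L_def]
  have "L ! i \<ge> 0" if "i < m" for i
    using L(2) nth_mem[of i L] that assms(2) unfolding L(1) by auto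
  then show ?thesis unfolding top_eigs_def L_def[symmetric] by auto
qed

text \<open>The remaining eigenvalues of \<open>H H\<^sup>H\<close> are non-negative, so dropping them only decreases the product.\<close>
lemma prod_top_eigs_le_det:
  assumes H: "H \<in> carrier_mat t r" and m: "m \<le> t" and \<rho>: "\<rho> > 0"
  shows "(\<Prod>i<m. 1 + \<rho> * top_eigs m (H * mat_adjoint H) i) \<le>
    Re (det (1\<^sub>m t + complex_of_real \<rho> \<cdot>\<^sub>m (H * mat_adjoint H)))"
proof -
  define L where "L = rev (sorted_list_of_multiset (image_mset Re (proots (char_poly (H * mat_adjoint H)))))"
  note L = eigenvalue_list_mult_adjoint[OF H, folded L_def]
  have "0 \<le> \<rho> * L ! i" if "i < t" for i
    using L(2) nth_mem[of i L] that \<rho> unfolding L(1) by auto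
  have "(\<Prod>i<m. 1 + \<rho> * top_eigs m (H * mat_adjoint H) i) = (\<Prod>i<m. 1 + \<rho> * L ! i)"
    unfolding top_eigs_def L_def by simp
  also have "\<dots> \<le> (\<Prod>i<t. 1 + \<rho> * L ! i)"
    using m \<open>\<And>i. i < t \<Longrightarrow> 0 \<le> \<rho> * L ! i\<close> by (intro prod_mono2) force+
  finally show ?thesis using L(3)[of \<rho>] \<rho> by simp
qed

lemma borel_measurable_cnj[measurable]:
  "f \<in> borel_measurable M \<Longrightarrow> (\<lambda>x. cnj (f x :: complex)) \<in> borel_measurable M"
  by (rule measurable_compose[of f _ borel cnj]) (auto intro: borel_measurable_continuous_onI continuous_intros)

lemma borel_measurable_det_one_plus_mult_adjoint:
  assumes Hd: "\<And>\<omega>. \<omega> \<in> space P \<Longrightarrow> H \<omega> \<in> carrier_mat t r"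
    and Hm: "\<And>i j. i < t \<Longrightarrow> j < r \<Longrightarrow> (\<lambda>\<omega>. H \<omega> $$ (i, j)) \<in> borel_measurable P"
  shows "(\<lambda>\<omega>. ennreal (Re (det (1\<^sub>m t + complex_of_real \<rho> \<cdot>\<^sub>m (H \<omega> * mat_adjoint (H \<omega>))))))
           \<in> borel_measurable P"
proof -
  define B where "B = (\<lambda>\<omega> i j. (if i = j then 1 else 0) + complex_of_real \<rho> * (\<Sum>k<r. H \<omega> $$ (i,k) * cnj (H \<omega> $$ (j,k))))"
  have Bm: "(\<lambda>\<omega>. B \<omega> i j) \<in> borel_measurable P" if "i < t" "j < t" for i j
    unfolding B_def using that
    by (intro borel_measurable_add borel_measurable_times borel_measurable_sum borel_measurable_const borel_measurable_cnj Hm) auto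
  have eq: "det (1\<^sub>m t + complex_of_real \<rho> \<cdot>\<^sub>m (H \<omega> * mat_adjoint (H \<omega>)))
     = (\<Sum> p \<in> {p. p permutes {0 ..< t}}. signof p * (\<Prod> i = 0 ..< t. B \<omega> i (p i)))"
    if \<omega>: "\<omega> \<in> space P" for \<omega>
  proof -
    have H: "H \<omega> \<in> carrier_mat t r" using Hd \<omega> .
    have C: "1\<^sub>m t + complex_of_real \<rho> \<cdot>\<^sub>m (H \<omega> * mat_adjoint (H \<omega>)) \<in> carrier_mat t t"
      using H mat_adjoint_carrier[OF H] by auto
    show ?thesis unfolding det_def'[OF C]
    proof (intro sum.cong refl arg_cong2[where f="(*)"] prod.cong)
      fix p i assume p: "p \<in> {p. p permutes {0 ..< t}}" and i: "i \<in> {0..<t}"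
      have pi: "p i < t" using p i by (auto dest: permutes_in_image)
      show "(1\<^sub>m t + complex_of_real \<rho> \<cdot>\<^sub>m (H \<omega> * mat_adjoint (H \<omega>))) $$ (i, p i) = B \<omega> i (p i)"
        using i pi H mat_adjoint_carrier[OF H] mult_adjoint_index[OF H _ pi, of i] by (simp add: B_def index_mult_mat(2,3) del: index_mult_mat(1))
    qed
  qed
  have "(\<lambda>\<omega>. (\<Sum> p \<in> {p. p permutes {0 ..< t}}. signof p * (\<Prod> i = 0 ..< t. B \<omega> i (p i)))) \<in> borel_measurable P"
  proof (intro borel_measurable_sum borel_measurable_times borel_measurable_prod)
    fix p i assume p: "p \<in> {p. p permutes {0 ..< t}}" and i: "i \<in> {0..<t}"
    have pi: "p i < t" using p i by (auto dest: permutes_in_image)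
    show "(\<lambda>\<omega>. B \<omega> i (p i)) \<in> borel_measurable P" using Bm i pi by auto
  qed auto
  then have "(\<lambda>\<omega>. det (1\<^sub>m t + complex_of_real \<rho> \<cdot>\<^sub>m (H \<omega> * mat_adjoint (H \<omega>)))) \<in> borel_measurable P"
    by (rule measurable_cong[THEN iffD1, rotated]) (simp add: eq)
  then show ?thesis by measurable
qed

subsection \<open>Averaging over the fading and the messages\<close>

text \<open>Unlike \<open>nn_integral_add\<close>, superadditivity needs no measurability: the success
  probabilities are not known to be measurable in the fading state.\<close>
lemma nn_integral_superadd:
  fixes f g :: "'a \<Rightarrow> ennreal"
  shows "integral\<^sup>N M f + integral\<^sup>N M g \<le> integral\<^sup>N M (\<lambda>x. f x + g x)"
proof -
  define A where "A = {a. simple_function M a \<and> a \<le> f}"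
  define B where "B = {b. simple_function M b \<and> b \<le> g}"
  have A0: "(\<lambda>_. 0) \<in> A" and B0: "(\<lambda>_. 0) \<in> B" unfolding A_def B_def by (auto simp: le_fun_def)
  have simple_le: "integral\<^sup>S M a + integral\<^sup>S M b \<le> integral\<^sup>N M (\<lambda>x. f x + g x)"
    if "a \<in> A" "b \<in> B" for a b
  proof -
    have sa: "simple_function M a" and sb: "simple_function M b" and "a \<le> f" "b \<le> g"
      using that unfolding A_def B_def by auto
    then have "integral\<^sup>N M (\<lambda>x. a x + b x) \<le> integral\<^sup>N M (\<lambda>x. f x + g x)"
      by (intro nn_integral_mono add_mono) (auto simp: le_fun_def)
    then show ?thesis using sa sb by (simp add: nn_integral_eq_simple_integral)
  qed
  have "integral\<^sup>N M f + integral\<^sup>N M g = (SUP a\<in>A. integral\<^sup>S M a) + (SUP b\<in>B. integral\<^sup>S M b)"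
    unfolding nn_integral_def A_def B_def by simp
  also have "\<dots> = (SUP a\<in>A. (SUP b\<in>B. integral\<^sup>S M b) + integral\<^sup>S M a)"
    using A0 by (subst add.commute) (rule ennreal_SUP_add_right, auto)
  also have "\<dots> = (SUP a\<in>A. SUP b\<in>B. integral\<^sup>S M a + integral\<^sup>S M b)"
    using B0 ennreal_SUP_add_right[of B _ "integral\<^sup>S M"] by (auto simp: add.commute intro!: SUP_cong)
  also have "\<dots> \<le> integral\<^sup>N M (\<lambda>x. f x + g x)"
    by (intro SUP_least simple_le)
  finally show ?thesis .
qed

lemma nn_integral_sum_superadd:
  fixes f :: "'b \<Rightarrow> 'a \<Rightarrow> ennreal"
  assumes "finite S"
  shows "(\<Sum>j\<in>S. integral\<^sup>N M (f j)) \<le> integral\<^sup>N M (\<lambda>x. \<Sum>j\<in>S. f j x)"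
  using assms
proof (induction S rule: finite_induct)
  case (insert a S)
  have "(\<Sum>j\<in>insert a S. integral\<^sup>N M (f j)) \<le> integral\<^sup>N M (f a) + integral\<^sup>N M (\<lambda>x. \<Sum>j\<in>S. f j x)"
    using insert by (simp add: add_left_mono)
  also have "\<dots> \<le> integral\<^sup>N M (\<lambda>x. \<Sum>j\<in>insert a S. f j x)"
    using insert nn_integral_superadd[of M "f a"] by simp
  finally show ?case .
qed simp

lemma aux_chan_success_sum_le_det:
  fixes H :: "complex mat" and f :: "nat \<Rightarrow> (nat \<Rightarrow> real) \<Rightarrow> complex mat"
    and g :: "(nat \<times> nat \<Rightarrow> complex) \<times> (nat \<Rightarrow> real) \<Rightarrow> nat"
  assumes H: "H \<in> carrier_mat t r" and m: "m \<le> t" and n: "n \<ge> 1" and \<rho>: "\<rho> > 0" and J: "finite J"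
    and f_pow: "\<And>j l. j \<in> J \<Longrightarrow> l \<in> {..<m} \<rightarrow>\<^sub>E {0..} \<Longrightarrow>
                 (\<Sum>i<m. \<Sum>k<n. (cmod (f j l $$ (k, i)))\<^sup>2) \<le> real n * \<rho>"
    and g_meas: "g \<in> measurable (PiM ({..<n} \<times> {..<m}) (\<lambda>_. borel) \<Otimes>\<^sub>M PiM {..<m} (\<lambda>_. borel))
                   (count_space UNIV)"
  defines "\<Lambda> \<equiv> top_eigs m (H * mat_adjoint H)"
  shows "(\<Sum>j\<in>J. emeasure (aux_chan n m (f j \<Lambda>) \<Lambda>) {Y \<in> space (aux_chan n m (f j \<Lambda>) \<Lambda>). g (Y, \<Lambda>) = j})
    \<le> ennreal (c_rt_factor n ^ m) * ennreal (Re (det (1\<^sub>m t + complex_of_real \<rho> \<cdot>\<^sub>m (H * mat_adjoint H))))"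
proof -
  have \<Lambda>: "\<Lambda> \<in> {..<m} \<rightarrow>\<^sub>E {0..}"
    unfolding \<Lambda>_def by (rule top_eigs_mult_adjoint_nonneg[OF H m])
  then have "(\<Sum>j\<in>J. emeasure (aux_chan n m (f j \<Lambda>) \<Lambda>) {Y \<in> space (aux_chan n m (f j \<Lambda>) \<Lambda>). g (Y, \<Lambda>) = j})
      \<le> ennreal (c_rt_factor n ^ m * (\<Prod>i<m. 1 + \<rho> * \<Lambda> i))"
    using n \<rho> J f_pow g_meas by (intro aux_chan_success_sum_le) auto
  also have "\<dots> \<le> ennreal (c_rt_factor n ^ m) * ennreal (Re (det (1\<^sub>m t + complex_of_real \<rho> \<cdot>\<^sub>m (H * mat_adjoint H))))"
    unfolding \<Lambda>_def using prod_top_eigs_le_det[OF H m \<rho>] c_rt_factor_nonneg[of n]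
    by (simp add: ennreal_mult'[symmetric] ennreal_leI mult_left_mono)
  finally show ?thesis .
qed

lemma card_mult_one_minus_Max_le_sum:
  fixes s :: "'a \<Rightarrow> ennreal"
  assumes "finite J"
  shows "of_nat (card J) * (1 - (MAX j\<in>J. 1 - s j)) \<le> (\<Sum>j\<in>J. s j)"
proof -
  have "1 - (MAX j\<in>J. 1 - s j) \<le> s j" if "j \<in> J" for j
  proof -
    have "1 - (MAX j\<in>J. 1 - s j) \<le> 1 - (1 - s j)"
      using assms that by (intro ennreal_minus_mono) auto
    also have "\<dots> \<le> s j"
    proof (cases "s j \<le> 1")
      case False
      then have "1 - s j = 0" by (simp add: diff_eq_0_iff_ennreal)
      then show ?thesis using False by simp
    qed (simp add: diff_diff_ennreal)
    finally show ?thesis .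
  qed
  then have "(\<Sum>j\<in>J. 1 - (MAX j\<in>J. 1 - s j)) \<le> (\<Sum>j\<in>J. s j)" by (rule sum_mono)
  then show ?thesis by simp
qed

lemma le_divide_of_nat_ennreal:
  fixes x y :: ennreal
  assumes "of_nat M * x \<le> y" "M \<ge> 1"
  shows "x \<le> y / of_nat M"
proof -
  have "x = of_nat M * x / of_nat M"
    using assms(2) by (simp add: mult.commute ennreal_mult_divide_eq ennreal_of_nat_neq_top)
  also have "\<dots> \<le> y / of_nat M" using assms(1) by (rule divide_right_mono_ennreal)
  finally show ?thesis .
qed

theorem lemma3:
  fixes P :: "'w measure"
    and H :: "'w \<Rightarrow> complex mat"
    and t r n M :: nat
    and \<rho> :: real
    and f :: "nat \<Rightarrow> (nat \<Rightarrow> real) \<Rightarrow> complex mat"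
    and g :: "(nat \<times> nat \<Rightarrow> complex) \<times> (nat \<Rightarrow> real) \<Rightarrow> nat"
  assumes "prob_space P"
    and "\<rho> > 0"
    and "n \<ge> 1"
    and "M \<ge> 1"
    and H_dim: "\<And>\<omega>. \<omega> \<in> space P \<Longrightarrow> H \<omega> \<in> carrier_mat t r"
    and H_meas: "\<And>i j. i < t \<Longrightarrow> j < r \<Longrightarrow> (\<lambda>\<omega>. H \<omega> $$ (i, j)) \<in> borel_measurable P"
    and f_dim: "\<And>j l. j \<in> {1..M} \<Longrightarrow> f j l \<in> carrier_mat n (min t r)"
    and f_pow: "\<And>j l. j \<in> {1..M} \<Longrightarrow> l \<in> {..<min t r} \<rightarrow>\<^sub>E {0..} \<Longrightarrow>
                 (\<Sum>i<min t r. \<Sum>k<n. (cmod (f j l $$ (k, i)))\<^sup>2) \<le> real n * \<rho>"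
    and f_meas: "\<And>j k i. j \<in> {1..M} \<Longrightarrow> k < n \<Longrightarrow> i < min t r \<Longrightarrow> (\<lambda>l. f j l $$ (k, i)) \<in> borel_measurable (PiM {..<min t r} (\<lambda>_. borel))"
    and g_meas: "g \<in> measurable (PiM ({..<n} \<times> {..<min t r}) (\<lambda>_. borel) \<Otimes>\<^sub>M PiM {..<min t r} (\<lambda>_. borel))
                   (count_space UNIV)"
  shows
    "(let m = min t r;
          \<Lambda> = (\<lambda>\<omega>. top_eigs m (H \<omega> * mat_adjoint (H \<omega>)));
          succ = (\<lambda>j. \<integral>\<^sup>+ \<omega>. emeasure (aux_chan n m (f j (\<Lambda> \<omega>)) (\<Lambda> \<omega>))
                         {Y \<in> space (aux_chan n m (f j (\<Lambda> \<omega>)) (\<Lambda> \<omega>)). g (Y, \<Lambda> \<omega>) = j} \<partial>P);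
          eps' = (MAX j\<in>{1..M}. 1 - succ j);
          EdetH = (\<integral>\<^sup>+ \<omega>. ennreal (Re (det (1\<^sub>m t + complex_of_real \<rho> \<cdot>\<^sub>m (H \<omega> * mat_adjoint (H \<omega>))))) \<partial>P)
      in 1 - eps' \<le> ennreal (c_rt_factor n ^ m) * EdetH / of_nat M)"
proof -
  define m where "m = min t r"
  define \<Lambda> where "\<Lambda> \<omega> = top_eigs m (H \<omega> * mat_adjoint (H \<omega>))" for \<omega>
  define succ_at where "succ_at j \<omega> = emeasure (aux_chan n m (f j (\<Lambda> \<omega>)) (\<Lambda> \<omega>))
    {Y \<in> space (aux_chan n m (f j (\<Lambda> \<omega>)) (\<Lambda> \<omega>)). g (Y, \<Lambda> \<omega>) = j}" for j \<omega>
  define D where "D \<omega> = ennreal (Re (det (1\<^sub>m t + complex_of_real \<rho> \<cdot>\<^sub>m (H \<omega> * mat_adjoint (H \<omega>)))))" for \<omega>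
  have "(\<Sum>j\<in>{1..M}. integral\<^sup>N P (succ_at j)) \<le> (\<integral>\<^sup>+ \<omega>. (\<Sum>j\<in>{1..M}. succ_at j \<omega>) \<partial>P)"
    by (rule nn_integral_sum_superadd) simp
  also have "\<dots> \<le> (\<integral>\<^sup>+ \<omega>. ennreal (c_rt_factor n ^ m) * D \<omega> \<partial>P)"
    unfolding succ_at_def \<Lambda>_def D_def m_def using assms(2,3) f_pow g_meas
    by (intro nn_integral_mono aux_chan_success_sum_le_det[where r = r] H_dim) auto
  also have "\<dots> = ennreal (c_rt_factor n ^ m) * integral\<^sup>N P D"
    unfolding D_def by (rule nn_integral_cmult[OF borel_measurable_det_one_plus_mult_adjoint[OF H_dim H_meas]])
  finally have "of_nat M * (1 - (MAX j\<in>{1..M}. 1 - integral\<^sup>N P (succ_at j))) \<le> ennreal (c_rt_factor n ^ m) * integral\<^sup>N P D"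
    using card_mult_one_minus_Max_le_sum[of "{1..M}" "\<lambda>j. integral\<^sup>N P (succ_at j)"] by simp
  then show ?thesis
    unfolding Let_def m_def[symmetric] \<Lambda>_def[symmetric] succ_at_def[symmetric] D_def[symmetric]
    using \<open>M \<ge> 1\<close> by (rule le_divide_of_nat_ennreal)
qed

end
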